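(* Let $v\in H^1$ satisfy $|v(x)|_{\mathbb R^3}=1$ for Lebesgue-a.e. $x\in\mathcal O$. Then the following equality holds in $(H^1)'$: $$v\times(v\times\Delta v)=-\Delta v-|\nabla v|_{\mathbb R^3}^2\,v.$$
   Context: $\mathcal O\subset\mathbb R$ is a bounded interval; $L^2$, $H^1$ are $\mathbb R^3$-valued spaces on $\mathcal O$, $(H^1)'$ the dual of $H^1$; $\times$ is the vector product in $\mathbb R^3$. For $v,\phi\in H^1$ the elements of $(H^1)'$ are defined by ${}_{(H^1)'}\langle\Delta v,\phi\rangle_{H^1}=-\langle\nabla v,\nabla\phi\rangle_{L^2}$, ${}_{(H^1)'}\langle v\times(v\times\Delta v),\phi\rangle_{H^1}=-\langle\nabla((\phi\times v)\times v),\nabla v\rangle_{L^2}$, and ${}_{(H^1)'}\langle|\nabla v|^2_{\mathbb R^3}v,\phi\rangle_{H^1}=\int_{\mathcal O}|\nabla v(x)|^2_{\mathbb R^3}\langle v(x),\phi(x)\rangle_{\mathbb R^3}\,dx$. *)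

theory Defs
  imports "HOL-Analysis.Analysis"
begin

definition test_fun :: "real set \<Rightarrow> (real \<Rightarrow> real) \<Rightarrow> bool" where
  "test_fun S \<psi> \<longleftrightarrow>
     (\<forall>n x. ((deriv ^^ n) \<psi>) differentiable (at x)) \<and>
     compact (closure {x. \<psi> x \<noteq> 0}) \<and> closure {x. \<psi> x \<noteq> 0} \<subseteq> S"

definition L2 :: "real set \<Rightarrow> (real \<Rightarrow> real^3) \<Rightarrow> bool" where
  "L2 S f \<longleftrightarrow> set_borel_measurable lborel S f \<and>
     set_integrable lborel S (\<lambda>x. (norm (f x))\<^sup>2)"

definition weak_deriv :: "real set \<Rightarrow> (real \<Rightarrow> real^3) \<Rightarrow> (real \<Rightarrow> real^3) \<Rightarrow> bool" where
  "weak_deriv S f g \<longleftrightarrow> set_integrable lborel S f \<and> set_integrable lborel S g \<and>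
     (\<forall>\<psi>. test_fun S \<psi> \<longrightarrow>
        (LINT x:S|lborel. deriv \<psi> x *\<^sub>R f x) = - (LINT x:S|lborel. \<psi> x *\<^sub>R g x))"

definition H1_grad :: "real set \<Rightarrow> (real \<Rightarrow> real^3) \<Rightarrow> (real \<Rightarrow> real^3) \<Rightarrow> bool" where
  "H1_grad S f g \<longleftrightarrow> L2 S f \<and> L2 S g \<and> weak_deriv S f g"

end

(* In one dimension an H^1 function agrees almost everywhere with C + \<integral>\<^sub>a\<^sup>x g, where g is its
   weak derivative (du Bois-Reymond lemma, proved with test functions built from exp (-1/t)).
   For these absolutely continuous representatives the product rule follows from Fubini's
   theorem, so bop f g has weak derivative bop f' g + bop f g' for every bounded bilinear bop,
   and weak derivatives are unique almost everywhere. Applied to |v|^2 = 1 this gives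
   v \<bullet> g = 0; applied twice to (\<phi> \<times> v) \<times> v and expanded with
   (x \<times> y) \<times> z = (x \<bullet> z) y - (y \<bullet> z) x, it shows that the weak derivative q satisfies
   q \<bullet> g = |g|^2 (v \<bullet> \<phi>) - g \<bullet> \<phi>' almost everywhere, the terms containing v \<bullet> g
   vanishing. That q is square integrable uses |v| = 1 and the boundedness of \<phi>. *)

theory Submission
  imports Defs "HOL-Computational_Algebra.Polynomial"
begin

section \<open>Smooth functions and bump functions\<close>

definition smooth :: "(real \<Rightarrow> real) \<Rightarrow> bool" where
  "smooth f \<longleftrightarrow> (\<forall>n x. (deriv ^^ n) f differentiable (at x))"

lemma higher_deriv_Suc: "(deriv ^^ Suc n) f = (deriv ^^ n) (deriv f)"
  by (simp only: funpow_Suc_right comp_apply)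

lemma smooth_iff_deriv: "smooth f \<longleftrightarrow> (\<forall>x. f differentiable (at x)) \<and> smooth (deriv f)"
  unfolding smooth_def by (metis funpow_0 higher_deriv_Suc not0_implies_Suc)

lemma smooth_differentiable: "smooth f \<Longrightarrow> f differentiable (at x)"
  using smooth_iff_deriv by blast

lemma smooth_deriv: "smooth f \<Longrightarrow> smooth (deriv f)"
  using smooth_iff_deriv by blast

lemma smooth_has_real_derivative: "smooth f \<Longrightarrow> (f has_real_derivative deriv f x) (at x)"
  using smooth_differentiable DERIV_deriv_iff_real_differentiable by blast

lemma continuous_on_smooth: "smooth f \<Longrightarrow> continuous_on A f"
  by (meson continuous_at_imp_continuous_on differentiable_imp_continuous_within smooth_differentiable)

lemma smooth_const: "smooth (\<lambda>_. c)"
proof -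
  have "(deriv ^^ n) (\<lambda>_. c) = (\<lambda>_. if n = 0 then c else 0)" for n
    by (induction n) simp_all
  then show ?thesis unfolding smooth_def by simp
qed

lemma higher_deriv_add:
  fixes f g :: "real \<Rightarrow> real"
  assumes "\<And>m x. m < n \<Longrightarrow> (deriv ^^ m) f differentiable (at x)"
    and "\<And>m x. m < n \<Longrightarrow> (deriv ^^ m) g differentiable (at x)"
  shows "(deriv ^^ n) (\<lambda>x. f x + g x) = (\<lambda>x. (deriv ^^ n) f x + (deriv ^^ n) g x)"
  using assms
proof (induction n)
  case (Suc n)
  have "((\<lambda>x. (deriv ^^ n) f x + (deriv ^^ n) g x) has_real_derivative
      (deriv ^^ Suc n) f x + (deriv ^^ Suc n) g x) (at x)" for x
    using Suc.prems by (intro DERIV_add) (auto simp: DERIV_deriv_iff_real_differentiable)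
  then show ?case
    using Suc by (auto intro!: DERIV_imp_deriv)
qed simp

lemma smooth_add: "smooth f \<Longrightarrow> smooth g \<Longrightarrow> smooth (\<lambda>x. f x + g x)"
  unfolding smooth_def by (subst higher_deriv_add) (auto intro: differentiable_add)

lemma deriv_mult_smooth:
  assumes "smooth f" "smooth g"
  shows "deriv (\<lambda>x. f x * g x) = (\<lambda>x. deriv f x * g x + f x * deriv g x)"
  using DERIV_mult[OF smooth_has_real_derivative[OF assms(1)] smooth_has_real_derivative[OF assms(2)]]
  by (intro ext DERIV_imp_deriv) (simp add: ac_simps)

lemma smooth_mult: "smooth f \<Longrightarrow> smooth g \<Longrightarrow> smooth (\<lambda>x. f x * g x)"
proof -
  have "\<forall>f g. smooth f \<longrightarrow> smooth g \<longrightarrow> (\<forall>x. (deriv ^^ n) (\<lambda>x. f x * g x) differentiable (at x))" for n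
  proof (induction n rule: less_induct)
    case (less n)
    show ?case
    proof (intro allI impI)
      fix f g x assume f: "smooth f" and g: "smooth g"
      show "(deriv ^^ n) (\<lambda>x. f x * g x) differentiable (at x)"
      proof (cases n)
        case 0
        then show ?thesis using f g by (simp add: differentiable_mult smooth_differentiable)
      next
        case (Suc m)
        have "(deriv ^^ n) (\<lambda>x. f x * g x) = (deriv ^^ m) (\<lambda>x. deriv f x * g x + f x * deriv g x)"
          by (simp only: Suc higher_deriv_Suc deriv_mult_smooth[OF f g])
        also have "\<dots> = (\<lambda>x. (deriv ^^ m) (\<lambda>x. deriv f x * g x) x + (deriv ^^ m) (\<lambda>x. f x * deriv g x) x)"
          using less Suc f g smooth_deriv by (intro higher_deriv_add) auto
        finally show ?thesis
          using less Suc f g smooth_deriv by (auto intro!: differentiable_add)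
      qed
    qed
  qed
  then show "smooth f \<Longrightarrow> smooth g \<Longrightarrow> smooth (\<lambda>x. f x * g x)"
    unfolding smooth_def by blast
qed

lemma smooth_diff: "smooth f \<Longrightarrow> smooth g \<Longrightarrow> smooth (\<lambda>x. f x - g x)"
  using smooth_add[of f "\<lambda>x. (-1) * g x"] smooth_mult[OF smooth_const, of g "-1"] by simp

lemma smooth_power: "smooth f \<Longrightarrow> smooth (\<lambda>x. f x ^ n)"
  by (induction n) (auto intro: smooth_const smooth_mult)

lemma smooth_affine:
  assumes "smooth f"
  shows "smooth (\<lambda>x. f (s * x + c))"
proof -
  have higher_deriv: "(deriv ^^ n) (\<lambda>x. f (s * x + c)) = (\<lambda>x. s ^ n * (deriv ^^ n) f (s * x + c))" for n
  proof (induction n)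
    case (Suc n)
    have "((\<lambda>x. s ^ n * (deriv ^^ n) f (s * x + c)) has_real_derivative
            s ^ n * ((deriv ^^ Suc n) f (s * x + c) * s)) (at x)" for x
      using assms unfolding smooth_def
      by (auto intro!: DERIV_cmult DERIV_chain2[where g="\<lambda>x. s * x + c"] derivative_eq_intros
          simp: DERIV_deriv_iff_real_differentiable)
    then show ?case
      using Suc by (auto intro!: DERIV_imp_deriv simp: algebra_simps)
  qed simp
  have "((deriv ^^ n) f \<circ> (\<lambda>x. s * x + c)) differentiable at x" for n x
    using assms unfolding smooth_def by (intro differentiable_chain_at) (auto intro!: derivative_intros)
  then show ?thesis
    unfolding smooth_def higher_deriv by (auto simp: o_def intro!: differentiable_mult)
qed

definition poly_exp_recip :: "real poly \<Rightarrow> real \<Rightarrow> real" where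
  "poly_exp_recip p t = (if t > 0 then poly p (1/t) * exp (-1/t) else 0)"

lemma poly_times_exp_neg_tendsto_0: "((\<lambda>y. poly p y * exp (-y)) \<longlongrightarrow> 0) at_top"
  for p :: "real poly"
proof -
  have "((\<lambda>y. \<Sum>i\<le>degree p. coeff p i * (y ^ i / exp y)) \<longlongrightarrow> (\<Sum>i\<le>degree p. coeff p i * 0)) at_top"
    by (intro tendsto_sum tendsto_mult tendsto_const tendsto_power_div_exp_0)
  moreover have "(\<Sum>i\<le>degree p. coeff p i * (y ^ i / exp y)) = poly p y * exp (-y)" for y
    by (simp add: poly_altdef sum_distrib_right exp_minus divide_inverse mult.assoc)
  ultimately show ?thesis by simp
qed

lemma poly_exp_recip_tendsto_0: "(poly_exp_recip p \<longlongrightarrow> 0) (at 0)"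
proof (subst filterlim_at_split, intro conjI)
  show "(poly_exp_recip p \<longlongrightarrow> 0) (at_left 0)"
    by (rule tendsto_eventually)
      (auto simp: eventually_at_left_field poly_exp_recip_def intro!: exI[of _ "-1"])
  have "((\<lambda>t. poly p (inverse t) * exp (- inverse t)) \<longlongrightarrow> 0) (at_right 0)"
    using filterlim_compose[OF poly_times_exp_neg_tendsto_0 filterlim_inverse_at_top_right] by simp
  then show "(poly_exp_recip p \<longlongrightarrow> 0) (at_right 0)"
    by (rule Lim_transform_eventually)
      (auto simp: eventually_at_right_field poly_exp_recip_def divide_inverse intro!: exI[of _ 1])
qed

text \<open>At \<open>0\<close> the difference quotient is \<open>poly_exp_recip (pCons 0 p)\<close>, which tends to \<open>0\<close>.\<close>

lemma poly_exp_recip_has_real_derivative: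
  "(poly_exp_recip p has_real_derivative poly_exp_recip ([:0, 0, 1:] * (p - pderiv p)) x) (at x)"
proof (cases x "0::real" rule: linorder_cases)
  case less
  show ?thesis
  proof (rule has_field_derivative_transform_within_open[where S="{..<0}" and f="\<lambda>_. 0"])
    show "((\<lambda>_. 0) has_real_derivative poly_exp_recip ([:0, 0, 1:] * (p - pderiv p)) x) (at x)"
      using less by (simp add: poly_exp_recip_def)
  qed (use less in \<open>auto simp: poly_exp_recip_def\<close>)
next
  case greater
  show ?thesis
  proof (rule has_field_derivative_transform_within_open[where S="{0<..}"])
    have "((\<lambda>t. poly p (1/t) * exp (-1/t)) has_real_derivative
        poly (pderiv p) (1/x) * (- 1 / x^2) * exp (-1/x) + poly p (1/x) * (exp (-1/x) * (1 / x^2))) (at x)"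
      using greater
      by (auto intro!: derivative_eq_intros DERIV_chain2[where f="poly p" and g="\<lambda>t. 1/t", OF poly_DERIV]
          simp: power2_eq_square field_simps)
    moreover have "poly (pderiv p) (1/x) * (- 1 / x^2) * exp (-1/x) + poly p (1/x) * (exp (-1/x) * (1 / x^2))
        = poly_exp_recip ([:0, 0, 1:] * (p - pderiv p)) x"
      using greater by (simp add: poly_exp_recip_def algebra_simps power2_eq_square)
    ultimately show "((\<lambda>t. poly p (1/t) * exp (-1/t)) has_real_derivative
        poly_exp_recip ([:0, 0, 1:] * (p - pderiv p)) x) (at x)"
      by simp
  qed (use greater in \<open>auto simp: poly_exp_recip_def\<close>)
next
  case equal
  have "(\<lambda>h. (poly_exp_recip p (0 + h) - poly_exp_recip p 0) / h) = poly_exp_recip (pCons 0 p)"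
    by (auto simp: poly_exp_recip_def fun_eq_iff divide_inverse)
  then show ?thesis
    using equal poly_exp_recip_tendsto_0 by (simp add: DERIV_def poly_exp_recip_def)
qed

lemma smooth_poly_exp_recip: "smooth (poly_exp_recip p)"
proof -
  have "(deriv ^^ n) (poly_exp_recip p) = poly_exp_recip (((\<lambda>p. [:0, 0, 1:] * (p - pderiv p)) ^^ n) p)" for n
    by (induction n) (simp_all add: DERIV_imp_deriv[OF poly_exp_recip_has_real_derivative])
  note higher_deriv = this
  show ?thesis
    unfolding smooth_def higher_deriv real_differentiable_def
    by (blast intro: poly_exp_recip_has_real_derivative)
qed

definition exp_recip :: "real \<Rightarrow> real" where
  "exp_recip t = (if t > 0 then exp (-1/t) else 0)"

lemma smooth_exp_recip: "smooth exp_recip"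
proof -
  have "exp_recip = poly_exp_recip 1"
    by (auto simp: exp_recip_def poly_exp_recip_def)
  then show ?thesis by (metis smooth_poly_exp_recip)
qed

lemma exp_recip_mono: "s \<le> t \<Longrightarrow> exp_recip s \<le> exp_recip t"
  by (auto simp: exp_recip_def frac_le)

definition bump :: "real \<Rightarrow> real \<Rightarrow> real \<Rightarrow> real" where
  "bump c d x = exp_recip (x - c) * exp_recip (d - x)"

lemma smooth_bump: "smooth (bump c d)"
  using smooth_mult[OF smooth_affine[OF smooth_exp_recip, of 1 "-c"] smooth_affine[OF smooth_exp_recip, of "-1" d]]
  by (simp add: bump_def[abs_def])

lemma bump_pos_iff: "bump c d x > 0 \<longleftrightarrow> c < x \<and> x < d"
  by (auto simp: bump_def exp_recip_def zero_less_mult_iff)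

lemma bump_nonneg: "bump c d x \<ge> 0"
  by (simp add: bump_def exp_recip_def)

lemma bump_le_1: "bump c d x \<le> 1"
  by (simp add: bump_def exp_recip_def mult_le_one)

lemma bump_eq_0: "x \<notin> {c<..<d} \<Longrightarrow> bump c d x = 0"
  using bump_pos_iff bump_nonneg by (metis greaterThanLessThan_iff order_less_le)

text \<open>The margin \<open>(d - c) / (n + 3)\<close> keeps the shrunken interval nonempty and tends to \<open>0\<close>.\<close>

definition indicator_approx :: "real \<Rightarrow> real \<Rightarrow> nat \<Rightarrow> real \<Rightarrow> real" where
  "indicator_approx c d n x =
     1 - (1 - bump (c + (d - c) / (real n + 3)) (d - (d - c) / (real n + 3)) x) ^ n"

lemma smooth_indicator_approx: "smooth (indicator_approx c d n)"
  unfolding indicator_approx_def[abs_def]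
  by (intro smooth_diff smooth_const smooth_power smooth_bump)

lemma indicator_approx_eq_0:
  "x \<notin> {c + (d - c) / (real n + 3) <..< d - (d - c) / (real n + 3)} \<Longrightarrow> indicator_approx c d n x = 0"
  by (simp add: indicator_approx_def bump_eq_0)

lemma abs_indicator_approx_le_1: "\<bar>indicator_approx c d n x\<bar> \<le> 1"
  using bump_nonneg bump_le_1 by (simp add: indicator_approx_def power_le_one)

lemma indicator_approx_tendsto:
  assumes "c < d"
  shows "(\<lambda>n. indicator_approx c d n x) \<longlonglongrightarrow> indicator {c<..<d} x"
proof (cases "x \<in> {c<..<d}")
  case False
  have "indicator_approx c d n x = 0" for n
  proof (rule indicator_approx_eq_0)
    have "(d - c) / (real n + 3) \<ge> 0"
      using assms by simp
    then show "x \<notin> {c + (d - c) / (real n + 3) <..< d - (d - c) / (real n + 3)}"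
      using False by auto
  qed
  then show ?thesis using False by simp
next
  case True
  define e where "e n = (d - c) / (real n + 3)" for n
  define \<beta> where "\<beta> n = bump (c + e n) (d - e n) x" for n
  have "e \<longlonglongrightarrow> 0"
    unfolding e_def by real_asymp
  moreover have "min (x - c) (d - x) > 0" using True by auto
  ultimately obtain N where "e N < min (x - c) (d - x)"
    by (metis LIMSEQ_le_const linorder_not_less order_less_irrefl)
  then have "\<beta> N > 0"
    unfolding \<beta>_def by (simp add: bump_pos_iff)
  have "e n \<le> e N" if "N \<le> n" for n
    using that assms by (auto simp: e_def intro!: divide_left_mono)
  then have \<beta>_mono: "\<beta> N \<le> \<beta> n" if "N \<le> n" for n
    using that unfolding \<beta>_def bump_def
    by (intro mult_mono exp_recip_mono) (auto simp: exp_recip_def)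
  have \<beta>_le_1: "\<beta> n \<le> 1" for n
    by (simp add: \<beta>_def bump_le_1)
  have "(\<lambda>n. (1 - \<beta> n) ^ n) \<longlonglongrightarrow> 0"
  proof (rule tendsto_sandwich[of "\<lambda>_. 0" _ _ "\<lambda>n. (1 - \<beta> N) ^ n"])
    show "\<forall>\<^sub>F n in sequentially. (1 - \<beta> n) ^ n \<le> (1 - \<beta> N) ^ n"
    proof (rule eventually_sequentiallyI[of N])
      fix n assume "N \<le> n"
      then show "(1 - \<beta> n) ^ n \<le> (1 - \<beta> N) ^ n"
        using \<beta>_mono \<beta>_le_1 by (intro power_mono) auto
    qed
    show "(\<lambda>n. (1 - \<beta> N) ^ n) \<longlonglongrightarrow> 0"
      using \<open>\<beta> N > 0\<close> \<beta>_le_1 by (intro LIMSEQ_power_zero) auto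
  qed (use \<beta>_le_1 in auto)
  then have "(\<lambda>n. 1 - (1 - \<beta> n) ^ n) \<longlonglongrightarrow> 1 - 0"
    by (intro tendsto_diff tendsto_const)
  then show ?thesis
    using True by (simp add: indicator_approx_def \<beta>_def e_def)
qed

section \<open>Test functions\<close>

lemma test_funI:
  assumes "smooth \<psi>" "\<And>x. \<psi> x \<noteq> 0 \<Longrightarrow> x \<in> {c..d}" "a < c" "d < b"
  shows "test_fun {a<..<b} \<psi>"
proof -
  have "{x. \<psi> x \<noteq> 0} \<subseteq> {c..d}"
    using assms(2) by auto
  then have "closure {x. \<psi> x \<noteq> 0} \<subseteq> {c..d}" "bounded {x. \<psi> x \<noteq> 0}"
    by (simp_all add: closure_minimal bounded_subset[OF bounded_closed_interval])
  then show ?thesis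
    using assms(1,3,4) unfolding test_fun_def smooth_def by auto
qed

lemma test_fun_smooth: "test_fun S \<psi> \<Longrightarrow> smooth \<psi>"
  unfolding test_fun_def smooth_def by blast

lemma test_fun_eq_0: "test_fun S \<psi> \<Longrightarrow> x \<notin> S \<Longrightarrow> \<psi> x = 0"
  unfolding test_fun_def using closure_subset[of "{x. \<psi> x \<noteq> 0}"] by blast

lemma test_fun_support_Icc:
  assumes "test_fun {a<..<b} \<psi>" "a < p" "p \<le> q" "q < b"
  obtains \<alpha> \<beta> where "a < \<alpha>" "\<alpha> \<le> p" "q \<le> \<beta>" "\<beta> < b" "\<And>x. \<psi> x \<noteq> 0 \<Longrightarrow> x \<in> {\<alpha>..\<beta>}"
proof -
  define K where "K = closure {x. \<psi> x \<noteq> 0} \<union> {p, q}"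
  have "compact K" "K \<subseteq> {a<..<b}"
    using assms unfolding test_fun_def K_def by auto
  have bdd: "bdd_below K" "bdd_above K"
    using compact_imp_bounded[OF \<open>compact K\<close>] by (auto intro: bounded_imp_bdd_below bounded_imp_bdd_above)
  have "K \<noteq> {}"
    by (simp add: K_def)
  then have "Inf K \<in> K" "Sup K \<in> K"
    using closed_contains_Inf closed_contains_Sup bdd compact_imp_closed[OF \<open>compact K\<close>] by auto
  show ?thesis
  proof (rule that[of "Inf K" "Sup K"])
    show "a < Inf K" "Sup K < b"
      using \<open>Inf K \<in> K\<close> \<open>Sup K \<in> K\<close> \<open>K \<subseteq> {a<..<b}\<close> by auto
    have "p \<in> K" "q \<in> K"
      by (simp_all add: K_def)
    then show "Inf K \<le> p" "q \<le> Sup K"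
      using bdd by (simp_all add: cInf_lower cSup_upper)
    fix x assume "\<psi> x \<noteq> 0"
    then have "x \<in> K"
      using closure_subset[of "{x. \<psi> x \<noteq> 0}"] by (auto simp: K_def)
    then show "x \<in> {Inf K..Sup K}"
      using bdd by (simp add: cInf_lower cSup_upper)
  qed
qed

lemma test_fun_indicator_approx:
  assumes "a \<le> c" "c < d" "d \<le> b"
  shows "test_fun {a<..<b} (indicator_approx c d n)"
proof (rule test_funI[OF smooth_indicator_approx])
  define e where "e = (d - c) / (real n + 3)"
  have "0 < e"
    using assms by (simp add: e_def)
  moreover have "e < (d - c) / 1"
    unfolding e_def using assms by (intro divide_strict_left_mono) auto
  ultimately show "a < c + e" "d - e < b"
    using assms by auto
  show "x \<in> {c + e..d - e}" if "indicator_approx c d n x \<noteq> 0" for x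
  proof -
    have "x \<in> {c + e<..<d - e}"
      using that indicator_approx_eq_0 unfolding e_def by blast
    then show ?thesis by simp
  qed
qed

lemma test_fun_integral_upto:
  fixes \<rho> :: "real \<Rightarrow> real"
  assumes \<rho>: "smooth \<rho>" and supp: "\<And>x. \<rho> x \<noteq> 0 \<Longrightarrow> x \<in> {\<alpha>..\<beta>}"
    and "a < \<alpha>" "\<alpha> \<le> \<beta>" "\<beta> < b" and mean_0: "integral {a..b} \<rho> = 0"
  shows "test_fun {a<..<b} (\<lambda>x. integral {a..x} \<rho>)" "deriv (\<lambda>x. integral {a..x} \<rho>) = \<rho>"
proof -
  define \<Psi> where "\<Psi> x = integral {a..x} \<rho>" for x
  have cont: "continuous_on A \<rho>" for A
    using continuous_on_smooth[OF \<rho>] .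
  have int: "\<rho> integrable_on {u..v}" for u v
    by (rule integrable_continuous_interval[OF cont])
  have outside: "\<rho> x = 0" if "x < \<alpha> \<or> \<beta> < x" for x
    using that supp[of x] by force
  have integral_0: "integral {u..v} \<rho> = 0" if "v < \<alpha> \<or> \<beta> < u" for u v
    using that outside by (intro integral_unique has_integral_is_0) auto
  have left: "\<Psi> y = 0" if "y < \<alpha>" for y
    unfolding \<Psi>_def using that by (intro integral_0) auto
  have right: "\<Psi> y = 0" if "\<beta> < y" for y
  proof (cases "y \<le> b")
    case True
    have "integral {a..y} \<rho> + integral {y..b} \<rho> = integral {a..b} \<rho>"
      using True that \<open>a < \<alpha>\<close> \<open>\<alpha> \<le> \<beta>\<close> by (intro Henstock_Kurzweil_Integration.integral_combine int) auto
    then show ?thesis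
      using that mean_0 integral_0[where u=y and v=b] by (simp add: \<Psi>_def)
  next
    case False
    have "integral {a..b} \<rho> + integral {b..y} \<rho> = integral {a..y} \<rho>"
      using False \<open>a < \<alpha>\<close> \<open>\<alpha> \<le> \<beta>\<close> \<open>\<beta> < b\<close> by (intro Henstock_Kurzweil_Integration.integral_combine int) auto
    then show ?thesis
      using \<open>\<beta> < b\<close> mean_0 integral_0[where u=b and v=y] by (simp add: \<Psi>_def)
  qed
  have has_deriv: "(\<Psi> has_real_derivative \<rho> x) (at x)" for x
  proof (cases "x \<in> {\<alpha>..\<beta>}")
    case True
    then have "a < x" "x < b"
      using \<open>a < \<alpha>\<close> \<open>\<beta> < b\<close> by auto
    then have "(\<Psi> has_real_derivative \<rho> x) (at x within {a..b})"
      unfolding \<Psi>_def by (intro integral_has_real_derivative cont) auto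
    then show ?thesis
      using at_within_Icc_at[OF \<open>a < x\<close> \<open>x < b\<close>] by simp
  next
    case False
    then have "x \<in> {..<\<alpha>} \<union> {\<beta><..}"
      by auto
    then show ?thesis
    proof (rule has_field_derivative_transform_within_open[where f="\<lambda>_. 0", rotated 2])
      show "((\<lambda>_. 0) has_real_derivative \<rho> x) (at x)"
        using False outside[of x] by auto
    qed (use left right in auto)
  qed
  then have "deriv \<Psi> = \<rho>"
    using DERIV_imp_deriv by blast
  moreover have "smooth \<Psi>"
    unfolding smooth_iff_deriv[of \<Psi>] \<open>deriv \<Psi> = \<rho>\<close>
    using has_deriv \<rho> by (auto simp: real_differentiable_def)
  then have "test_fun {a<..<b} \<Psi>"
  proof (rule test_funI)
    show "x \<in> {\<alpha>..\<beta>}" if "\<Psi> x \<noteq> 0" for x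
      using that left[of x] right[of x] by (auto simp: not_less[symmetric])
  qed fact+
  ultimately show "test_fun {a<..<b} (\<lambda>x. integral {a..x} \<rho>)" "deriv (\<lambda>x. integral {a..x} \<rho>) = \<rho>"
    unfolding \<Psi>_def[abs_def] by auto
qed

section \<open>Integrals over intervals\<close>

lemma set_borel_measurable_set_integrable:
  "set_integrable M A (f :: _ \<Rightarrow> 'b::{banach, second_countable_topology}) \<Longrightarrow> set_borel_measurable M A f"
  unfolding set_integrable_def set_borel_measurable_def by (rule borel_measurable_integrable)

lemma set_borel_measurable_bounded_bilinear:
  fixes f :: "_ \<Rightarrow> 'a::euclidean_space" and g :: "_ \<Rightarrow> 'b::euclidean_space"
  assumes bop: "bounded_bilinear bop"
    and "set_borel_measurable M A f" "set_borel_measurable M A g"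
  shows "set_borel_measurable M A (\<lambda>x. (bop (f x) (g x) :: 'c::euclidean_space))"
proof -
  have "continuous_on UNIV (\<lambda>z. bop (fst z) (snd z))"
    by (auto simp: continuous_on_eq_continuous_within intro!: bounded_bilinear.continuous[OF bop] continuous_intros)
  then have "(\<lambda>x. bop (indicator A x *\<^sub>R f x) (indicator A x *\<^sub>R g x)) \<in> borel_measurable M"
    using assms(2,3) unfolding set_borel_measurable_def by (rule borel_measurable_continuous_Pair[rotated 2])
  moreover have "bop (indicator A x *\<^sub>R f x) (indicator A x *\<^sub>R g x) = indicator A x *\<^sub>R bop (f x) (g x)" for x
    by (simp add: bounded_bilinear.scaleR_left[OF bop] bounded_bilinear.scaleR_right[OF bop] indicator_def)
  ultimately show ?thesis
    unfolding set_borel_measurable_def by simp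
qed

lemma set_integrable_bounded_linear:
  fixes f :: "_ \<Rightarrow> 'a::euclidean_space"
  assumes "bounded_linear T" "set_integrable M A f"
  shows "set_integrable M A (\<lambda>x. (T (f x) :: 'b::euclidean_space))"
proof -
  have "integrable M (\<lambda>x. T (indicator A x *\<^sub>R f x))"
    using integrable_bounded_linear[OF assms(1)] assms(2) unfolding set_integrable_def by blast
  then show ?thesis
    unfolding set_integrable_def by (simp add: linear_simps[OF assms(1)])
qed

lemma set_integral_bounded_linear:
  fixes f :: "_ \<Rightarrow> 'a::euclidean_space"
  assumes "bounded_linear T" "set_integrable M A f"
  shows "(LINT x:A|M. (T (f x) :: 'b::euclidean_space)) = T (LINT x:A|M. f x)"
proof -
  have "(LINT x:A|M. T (f x)) = integral\<^sup>L M (\<lambda>x. T (indicator A x *\<^sub>R f x))"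
    unfolding set_lebesgue_integral_def by (simp add: linear_simps[OF assms(1)])
  also have "\<dots> = T (LINT x:A|M. f x)"
    using integral_bounded_linear[OF assms(1)] assms(2)
    unfolding set_integrable_def set_lebesgue_integral_def by blast
  finally show ?thesis .
qed

lemma set_integrable_continuous_on_Icc:
  fixes f :: "real \<Rightarrow> 'a::euclidean_space"
  assumes "continuous_on {a..b} f" "S \<subseteq> {a..b}" "S \<in> sets borel"
  shows "set_integrable lborel S f"
  using set_integrable_subset[OF borel_integrable_atLeastAtMost'[OF assms(1)]] assms(2,3) by simp

lemma set_integrable_bilinear_continuous_left:
  fixes F :: "real \<Rightarrow> 'a::euclidean_space" and u :: "real \<Rightarrow> 'b::euclidean_space"
  assumes bop: "bounded_bilinear bop" and F: "continuous_on {a..b} F"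
    and u: "set_integrable lborel S u" and S: "S \<subseteq> {a..b}" "S \<in> sets borel"
  shows "set_integrable lborel S (\<lambda>x. (bop (F x) (u x) :: 'c::euclidean_space))"
proof -
  obtain B where B: "B \<ge> 0" "\<And>x. x \<in> {a..b} \<Longrightarrow> norm (F x) \<le> B"
    using continuous_on_compact_bound[OF compact_Icc F] by blast
  obtain K where K: "\<And>x y. norm (bop x y) \<le> norm x * norm y * K" "K \<ge> 0"
    using bounded_bilinear.nonneg_bounded[OF bop] by blast
  show ?thesis
  proof (rule set_integrable_bound)
    show "set_integrable lborel S (\<lambda>x. (B * K) *\<^sub>R u x)"
      using u by (rule set_integrable_scaleR_right)
    show "set_borel_measurable lborel S (\<lambda>x. bop (F x) (u x))"
      using set_integrable_continuous_on_Icc[OF F S] u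
      by (intro set_borel_measurable_bounded_bilinear[OF bop] set_borel_measurable_set_integrable)
    show "AE x in lborel. x \<in> S \<longrightarrow> norm (bop (F x) (u x)) \<le> norm ((B * K) *\<^sub>R u x)"
    proof (intro AE_I2 impI)
      fix x assume "x \<in> S"
      then have "norm (bop (F x) (u x)) \<le> B * norm (u x) * K"
        using K B(2)[of x] S by (meson mult_right_mono norm_ge_zero order.trans subsetD)
      also have "\<dots> = norm ((B * K) *\<^sub>R u x)"
        using K B by (simp add: ac_simps)
      finally show "norm (bop (F x) (u x)) \<le> norm ((B * K) *\<^sub>R u x)" .
    qed
  qed
qed

lemma set_integrable_bilinear_continuous_right:
  fixes F :: "real \<Rightarrow> 'a::euclidean_space" and u :: "real \<Rightarrow> 'b::euclidean_space"
  assumes "bounded_bilinear bop" "continuous_on {a..b} F"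
    and "set_integrable lborel S u" "S \<subseteq> {a..b}" "S \<in> sets borel"
  shows "set_integrable lborel S (\<lambda>x. (bop (u x) (F x) :: 'c::euclidean_space))"
  using set_integrable_bilinear_continuous_left[OF bounded_bilinear.flip[OF assms(1)] assms(2-)] by simp

lemma set_integrable_Icc_iff_Ioo:
  fixes f :: "real \<Rightarrow> 'a::euclidean_space"
  shows "set_integrable lborel {a..b} f \<longleftrightarrow> set_integrable lborel {a<..<b} f"
  unfolding set_integrable_def
  by (rule integrable_discrete_difference[where X="{a, b}"]) (auto simp: indicator_def)

lemma set_integral_Icc_eq_Ioo:
  fixes f :: "real \<Rightarrow> 'a::euclidean_space"
  shows "(LINT x:{a..b}|lborel. f x) = (LINT x:{a<..<b}|lborel. f x)"
  unfolding set_lebesgue_integral_def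
  by (rule integral_discrete_difference[where X="{a, b}"]) (auto simp: indicator_def)

lemma set_integral_cong_AE:
  fixes f g :: "_ \<Rightarrow> 'a::euclidean_space"
  assumes "set_borel_measurable M A f" "set_borel_measurable M A g" "AE x in M. x \<in> A \<longrightarrow> f x = g x"
  shows "(LINT x:A|M. f x) = (LINT x:A|M. g x)"
  unfolding set_lebesgue_integral_def
  using assms(1,2) unfolding set_borel_measurable_def
  by (rule integral_cong_AE) (use assms(3) in \<open>eventually_elim, auto simp: indicator_def\<close>)

lemma set_integrable_AE_eq:
  fixes f g :: "_ \<Rightarrow> 'a::euclidean_space"
  assumes "set_integrable M A f" "set_borel_measurable M A g" "AE x in M. x \<in> A \<longrightarrow> f x = g x"
  shows "set_integrable M A g"
  using assms(1) unfolding set_integrable_def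
  using assms(2) unfolding set_borel_measurable_def
  by (rule integrable_cong_AE_imp) (use assms(3) in \<open>eventually_elim, auto simp: indicator_def\<close>)

section \<open>The fundamental lemma of the calculus of variations\<close>

lemma set_integral_Ioo_eq_0_if_test_fun_orthogonal:
  fixes h :: "real \<Rightarrow> 'a::euclidean_space"
  assumes h: "set_integrable lborel {a<..<b} h"
    and orth: "\<And>\<psi>. test_fun {a<..<b} \<psi> \<Longrightarrow> (LINT x:{a<..<b}|lborel. \<psi> x *\<^sub>R h x) = 0"
    and cd: "a \<le> c" "c < d" "d \<le> b"
  shows "(LINT x:{c<..<d}|lborel. h x) = 0"
proof -
  define H where "H x = indicator {a<..<b} x *\<^sub>R h x" for x
  have "integrable lborel H"
    using h unfolding set_integrable_def H_def by simp
  then have [measurable]: "H \<in> borel_measurable lborel"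
    by auto
  have [measurable]: "indicator_approx c d n \<in> borel_measurable lborel" for n
    using continuous_on_smooth[OF smooth_indicator_approx] by (simp add: borel_measurable_continuous_onI)
  have "(\<lambda>n. LBINT x. indicator_approx c d n x *\<^sub>R H x) \<longlonglongrightarrow> (LBINT x. indicator {c<..<d} x *\<^sub>R H x)"
  proof (rule integral_dominated_convergence[where w="\<lambda>x. norm (H x)"])
    show "AE x in lborel. (\<lambda>n. indicator_approx c d n x *\<^sub>R H x) \<longlonglongrightarrow> indicator {c<..<d} x *\<^sub>R H x"
      using cd by (intro AE_I2 tendsto_scaleR indicator_approx_tendsto tendsto_const)
    show "AE x in lborel. norm (indicator_approx c d n x *\<^sub>R H x) \<le> norm (H x)" for n
      using abs_indicator_approx_le_1 by (intro AE_I2) (auto intro!: mult_left_le_one_le)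
  qed (use \<open>integrable lborel H\<close> in auto)
  moreover have "(LBINT x. indicator_approx c d n x *\<^sub>R H x) = 0" for n
  proof -
    have "(LBINT x. indicator_approx c d n x *\<^sub>R H x) = (LINT x:{a<..<b}|lborel. indicator_approx c d n x *\<^sub>R h x)"
      unfolding set_lebesgue_integral_def H_def by (simp add: mult.commute)
    also have "\<dots> = 0"
      using cd by (intro orth test_fun_indicator_approx)
    finally show ?thesis .
  qed
  moreover have "indicator {c<..<d} x *\<^sub>R H x = indicator {c<..<d} x *\<^sub>R h x" for x
    using cd by (auto simp: H_def indicator_def)
  ultimately show ?thesis
    unfolding set_lebesgue_integral_def by (simp add: LIMSEQ_const_iff)
qed

text \<open>The densities \<open>max 0 h\<close> and \<open>max 0 (-h)\<close> give the same measure to every half-line,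
  hence they agree almost everywhere.\<close>

lemma AE_eq_0_if_interval_integrals_eq_0:
  fixes h :: "real \<Rightarrow> real"
  assumes h: "set_integrable lborel {a<..<b} h" and "a < b"
    and intervals: "\<And>c d. a \<le> c \<Longrightarrow> c < d \<Longrightarrow> d \<le> b \<Longrightarrow> (LINT x:{c<..<d}|lborel. h x) = 0"
  shows "AE x in lborel. x \<in> {a<..<b} \<longrightarrow> h x = 0"
proof -
  define H where "H x = indicator {a<..<b} x * h x" for x
  define pos where "pos x = max 0 (H x)" for x
  define neg where "neg x = max 0 (- H x)" for x
  have "integrable lborel H"
    using h unfolding set_integrable_def H_def by simp
  then have pos: "integrable lborel pos" and neg: "integrable lborel neg"
    unfolding pos_def neg_def by (auto intro: integrable_max)
  have "(LBINT y. pos y * indicator {x<..} y) - (LBINT y. neg y * indicator {x<..} y)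
      = (LBINT y. pos y * indicator {x<..} y - neg y * indicator {x<..} y)" for x
    using pos neg by (intro Bochner_Integration.integral_diff[symmetric] integrable_real_mult_indicator) auto
  also have "\<dots> x = (LBINT y. indicator {x<..} y * H y)" for x
    by (intro Bochner_Integration.integral_cong) (auto simp: pos_def neg_def split: split_max)
  moreover have "(LBINT y. indicator {x<..} y * H y) = 0" for x
  proof (cases "x < b")
    case True
    have "(LBINT y. indicator {x<..} y * H y) = (LINT y:{max a x<..<b}|lborel. h y)"
      unfolding set_lebesgue_integral_def by (auto simp: H_def indicator_def intro!: Bochner_Integration.integral_cong)
    also have "\<dots> = 0"
      using True \<open>a < b\<close> by (intro intervals) auto
    finally show ?thesis .
  next
    case False
    then have "(\<lambda>y. indicator {x<..} y * H y) = (\<lambda>_. 0)"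
      by (auto simp: H_def indicator_def fun_eq_iff)
    then show ?thesis
      by simp
  qed
  ultimately have same_tails: "(LBINT y. pos y * indicator {x<..} y) = (LBINT y. neg y * indicator {x<..} y)" for x
    by simp
  have emeasure_tail: "emeasure (density lborel q) {x<..} = ennreal (LBINT y. q y * indicator {x<..} y)"
    if q: "integrable lborel q" "\<And>y. q y \<ge> 0" for q :: "real \<Rightarrow> real" and x
  proof -
    have [measurable]: "q \<in> borel_measurable lborel"
      using q by auto
    have "emeasure (density lborel q) {x<..} = (\<integral>\<^sup>+ y. ennreal (q y * indicator {x<..} y) \<partial>lborel)"
      by (subst emeasure_density) (auto intro!: nn_integral_cong simp: indicator_def)
    also have "\<dots> = ennreal (LBINT y. q y * indicator {x<..} y)"
      using q by (intro nn_integral_eq_integral) (auto intro: integrable_real_mult_indicator)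
    finally show ?thesis .
  qed
  have "density lborel pos = density lborel neg"
  proof (rule measure_eqI_lessThan)
    show "emeasure (density lborel pos) {x<..} < \<infinity>" for x
      using emeasure_tail[OF pos] by (simp add: pos_def)
    show "emeasure (density lborel pos) {x<..} = emeasure (density lborel neg) {x<..}" for x
      using emeasure_tail[OF pos] emeasure_tail[OF neg] same_tails by (simp add: pos_def neg_def)
  qed simp_all
  moreover have [measurable]: "H \<in> borel_measurable borel"
    using borel_measurable_integrable[OF \<open>integrable lborel H\<close>] by simp
  ultimately have "AE x in lborel. pos x = neg x"
    by (subst (asm) sigma_finite_measure.density_unique_iff[OF sigma_finite_lborel])
      (auto simp: pos_def neg_def)
  then show ?thesis
    by (rule AE_mp) (auto intro!: AE_I2 simp: pos_def neg_def H_def split: split_max)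
qed

lemma fundamental_lemma_calculus_of_variations:
  fixes h :: "real \<Rightarrow> 'a::euclidean_space"
  assumes "a < b" and h: "set_integrable lborel {a<..<b} h"
    and orth: "\<And>\<psi>. test_fun {a<..<b} \<psi> \<Longrightarrow> (LINT x:{a<..<b}|lborel. \<psi> x *\<^sub>R h x) = 0"
  shows "AE x in lborel. x \<in> {a<..<b} \<longrightarrow> h x = 0"
proof -
  have "AE x in lborel. x \<in> {a<..<b} \<longrightarrow> h x \<bullet> i = 0" if "i \<in> Basis" for i :: 'a
  proof (rule AE_eq_0_if_interval_integrals_eq_0[OF set_integrable_bounded_linear[OF bounded_linear_inner_left h] \<open>a < b\<close>])
    fix c d assume cd: "a \<le> c" "c < d" "d \<le> b"
    have "set_integrable lborel {c<..<d} h"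
      using cd by (intro set_integrable_subset[OF h]) auto
    then have "(LINT x:{c<..<d}|lborel. h x \<bullet> i) = (LINT x:{c<..<d}|lborel. h x) \<bullet> i"
      by (rule set_integral_bounded_linear[OF bounded_linear_inner_left])
    also have "\<dots> = 0"
      using set_integral_Ioo_eq_0_if_test_fun_orthogonal[OF h orth cd] by simp
    finally show "(LINT x:{c<..<d}|lborel. h x \<bullet> i) = 0" .
  qed
  then have "AE x in lborel. \<forall>i\<in>Basis. x \<in> {a<..<b} \<longrightarrow> h x \<bullet> i = 0"
    by (rule AE_finite_allI[OF finite_Basis])
  then show ?thesis
    by (rule AE_mp) (auto intro!: AE_I2 simp: euclidean_all_zero_iff)
qed

text \<open>Fix a bump \<open>\<theta>\<close> of positive mass. Subtracting the right multiple of \<open>\<theta>\<close> from a test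
  function \<open>\<psi>\<close> gives a function of mean zero, which is the derivative of a test function; hence
  \<open>h - C\<close> is orthogonal to all test functions for the weighted mean \<open>C\<close> of \<open>h\<close> against \<open>\<theta>\<close>.\<close>

lemma du_Bois_Reymond:
  fixes h :: "real \<Rightarrow> 'a::euclidean_space"
  assumes "a < b" and h: "set_integrable lborel {a<..<b} h"
    and orth: "\<And>\<psi>. test_fun {a<..<b} \<psi> \<Longrightarrow> (LINT x:{a<..<b}|lborel. deriv \<psi> x *\<^sub>R h x) = 0"
  obtains C where "AE x in lborel. x \<in> {a<..<b} \<longrightarrow> h x = C"
proof -
  define S where "S = {a<..<b}"
  define p where "p = a + (b - a) / 3"
  define q where "q = b - (b - a) / 3"
  have "a < p" "p < q" "q < b"
    using \<open>a < b\<close> by (auto simp: p_def q_def field_simps)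
  define \<theta> where "\<theta> = bump p q"
  have \<theta>: "smooth \<theta>"
    unfolding \<theta>_def by (rule smooth_bump)
  have \<theta>_supp: "\<theta> x \<noteq> 0 \<Longrightarrow> x \<in> {p..q}" for x
    unfolding \<theta>_def using bump_nonneg[of p q x] bump_pos_iff[of p q x] by auto
  define I where "I f = integral {a..b} f" for f :: "real \<Rightarrow> real"
  have "I \<theta> > 0"
  proof -
    have \<theta>_nonneg: "\<And>x. x \<in> {a..b} \<Longrightarrow> \<theta> x \<ge> 0"
      by (simp add: \<theta>_def bump_nonneg)
    moreover have "\<theta> ((p + q) / 2) \<noteq> 0" "(p + q) / 2 \<in> {a..b}"
      using \<open>a < p\<close> \<open>p < q\<close> \<open>q < b\<close> bump_pos_iff[of p q "(p + q) / 2"] by (auto simp: \<theta>_def)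
    ultimately have "I \<theta> \<noteq> 0"
      unfolding I_def using integral_eq_0_iff[OF continuous_on_smooth[OF \<theta>] \<open>a < b\<close>] by blast
    moreover have "I \<theta> \<ge> 0"
      unfolding I_def using \<theta>_nonneg
      by (intro integral_nonneg integrable_continuous_interval continuous_on_smooth[OF \<theta>]) auto
    ultimately show ?thesis by simp
  qed
  have integrable_smooth: "set_integrable lborel S (\<lambda>x. f x *\<^sub>R h x)" if "smooth f" for f
    unfolding S_def
    by (rule set_integrable_bilinear_continuous_left[OF bounded_bilinear_scaleR continuous_on_smooth[OF that] h, of a b])
      auto
  define C where "C = (1 / I \<theta>) *\<^sub>R (LINT x:S|lborel. \<theta> x *\<^sub>R h x)"
  have "(LINT x:S|lborel. \<psi> x *\<^sub>R (h x - C)) = 0" if \<psi>: "test_fun S \<psi>" for \<psi>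
  proof -
    have "smooth \<psi>"
      using \<psi> by (rule test_fun_smooth)
    obtain \<alpha> \<beta> where "a < \<alpha>" "\<alpha> \<le> p" "q \<le> \<beta>" "\<beta> < b" and \<psi>_supp: "\<And>x. \<psi> x \<noteq> 0 \<Longrightarrow> x \<in> {\<alpha>..\<beta>}"
      using test_fun_support_Icc[OF \<psi>[unfolded S_def] \<open>a < p\<close> _ \<open>q < b\<close>] \<open>p < q\<close> by auto
    have \<psi>_integrable: "set_integrable lborel S \<psi>"
      unfolding S_def
      by (rule set_integrable_continuous_on_Icc[OF continuous_on_smooth[OF \<open>smooth \<psi>\<close>, of "{a..b}"]]) auto
    define k where "k = I \<psi> / I \<theta>"
    define \<rho> where "\<rho> x = \<psi> x - k * \<theta> x" for x
    have "smooth \<rho>"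
      unfolding \<rho>_def[abs_def] using smooth_diff[OF \<open>smooth \<psi>\<close> smooth_mult[OF smooth_const \<theta>]] .
    moreover have "x \<in> {\<alpha>..\<beta>}" if "\<rho> x \<noteq> 0" for x
    proof -
      have "\<psi> x \<noteq> 0 \<or> \<theta> x \<noteq> 0"
        using that by (auto simp: \<rho>_def)
      then show ?thesis
        using \<psi>_supp[of x] \<theta>_supp[of x] \<open>\<alpha> \<le> p\<close> \<open>q \<le> \<beta>\<close> by auto
    qed
    moreover have "integral {a..b} \<rho> = 0"
    proof -
      have "\<psi> integrable_on {a..b}" "\<theta> integrable_on {a..b}"
        using \<open>smooth \<psi>\<close> \<theta> by (simp_all add: integrable_continuous_interval continuous_on_smooth)
      then have "integral {a..b} \<rho> = I \<psi> - k * I \<theta>"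
        using integral_diff[OF _ integrable_on_cmult_left[of \<theta> _ k]] by (simp add: \<rho>_def[abs_def] I_def)
      then show ?thesis
        using \<open>I \<theta> > 0\<close> by (simp add: k_def)
    qed
    moreover have "\<alpha> \<le> \<beta>"
      using \<open>\<alpha> \<le> p\<close> \<open>p < q\<close> \<open>q \<le> \<beta>\<close> by simp
    ultimately have "test_fun S (\<lambda>x. integral {a..x} \<rho>)" "deriv (\<lambda>x. integral {a..x} \<rho>) = \<rho>"
      using test_fun_integral_upto \<open>a < \<alpha>\<close> \<open>\<beta> < b\<close> unfolding S_def by blast+
    then have "0 = (LINT x:S|lborel. \<rho> x *\<^sub>R h x)"
      using orth[of "\<lambda>x. integral {a..x} \<rho>"] unfolding S_def by simp
    also have "\<dots> = (LINT x:S|lborel. \<psi> x *\<^sub>R h x - k *\<^sub>R (\<theta> x *\<^sub>R h x))"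
      by (simp add: \<rho>_def algebra_simps)
    also have "\<dots> = (LINT x:S|lborel. \<psi> x *\<^sub>R h x) - (LINT x:S|lborel. k *\<^sub>R (\<theta> x *\<^sub>R h x))"
      by (rule set_integral_diff(2)[OF integrable_smooth[OF \<open>smooth \<psi>\<close>]
            set_integrable_scaleR_right[OF integrable_smooth[OF \<theta>]]])
    also have "(LINT x:S|lborel. k *\<^sub>R (\<theta> x *\<^sub>R h x)) = k *\<^sub>R (LINT x:S|lborel. \<theta> x *\<^sub>R h x)"
      by (rule set_integral_scaleR_right)
    also have "k *\<^sub>R (LINT x:S|lborel. \<theta> x *\<^sub>R h x) = (LINT x:S|lborel. \<psi> x *\<^sub>R C)"
    proof -
      have "(LINT x:S|lborel. \<psi> x *\<^sub>R C) = (LINT x:S|lborel. \<psi> x) *\<^sub>R C"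
        by (rule set_integral_bounded_linear[OF bounded_linear_scaleR_left \<psi>_integrable])
      also have "(LINT x:S|lborel. \<psi> x) = I \<psi>"
        using \<psi>_integrable
        by (simp add: S_def I_def set_borel_integral_eq_integral integral_open_interval_real)
      finally show ?thesis
        by (simp add: C_def k_def)
    qed
    also have "(LINT x:S|lborel. \<psi> x *\<^sub>R h x) - (LINT x:S|lborel. \<psi> x *\<^sub>R C) = (LINT x:S|lborel. \<psi> x *\<^sub>R (h x - C))"
      unfolding scaleR_diff_right
      by (rule set_integral_diff(2)[symmetric, OF integrable_smooth[OF \<open>smooth \<psi>\<close>]
            set_integrable_bounded_linear[OF bounded_linear_scaleR_left \<psi>_integrable]])
    finally show ?thesis by simp
  qed
  moreover have "set_integrable lborel S (\<lambda>_. C)"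
    unfolding S_def by (rule set_integrable_continuous_on_Icc[of a b]) auto
  then have "set_integrable lborel S (\<lambda>x. h x - C)"
    by (rule set_integral_diff(1)[OF h[folded S_def]])
  ultimately have "AE x in lborel. x \<in> {a<..<b} \<longrightarrow> h x - C = 0"
    unfolding S_def by (intro fundamental_lemma_calculus_of_variations[OF \<open>a < b\<close>])
  then show ?thesis
    using that by auto
qed

section \<open>Primitives and the product rule\<close>

definition primitive :: "real \<Rightarrow> (real \<Rightarrow> 'a::euclidean_space) \<Rightarrow> real \<Rightarrow> 'a" where
  "primitive a f x = (LINT t:{a..x}|lborel. f t)"

lemma primitive_eq_integral:
  fixes u :: "real \<Rightarrow> 'a::euclidean_space"
  assumes "set_integrable lborel {a..b} u" "t \<in> {a..b}"
  shows "primitive a u t = integral {a..t} u"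
  unfolding primitive_def using assms
  by (intro set_borel_integral_eq_integral set_integrable_subset[OF assms(1)]) auto

lemma continuous_on_primitive:
  fixes u :: "real \<Rightarrow> 'a::euclidean_space"
  assumes "set_integrable lborel {a..b} u"
  shows "continuous_on {a..b} (primitive a u)"
proof -
  have "continuous_on {a..b} (\<lambda>t. integral {a..t} u)"
    using set_borel_integral_eq_integral(1)[OF assms] by (rule indefinite_integral_continuous_1)
  then show ?thesis
    by (rule continuous_on_eq) (use primitive_eq_integral[OF assms] in auto)
qed

lemma integrable_pair_lborel_bilinear:
  fixes f :: "real \<Rightarrow> 'a::euclidean_space" and g :: "real \<Rightarrow> 'b::euclidean_space"
  assumes bop: "bounded_bilinear bop" and f: "integrable lborel f" and g: "integrable lborel g"
  shows "integrable (lborel \<Otimes>\<^sub>M lborel) (\<lambda>z. (bop (f (fst z)) (g (snd z)) :: 'c::euclidean_space))"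
proof -
  have [measurable]: "f \<in> borel_measurable lborel" "g \<in> borel_measurable lborel"
    using f g by auto
  obtain K where K: "\<And>x y. norm (bop x y) \<le> norm x * norm y * K"
    using bounded_bilinear.bounded[OF bop] by blast
  have "(\<integral>\<^sup>+ z. ennreal (norm (f (fst z)) * norm (g (snd z))) \<partial>(lborel \<Otimes>\<^sub>M lborel))
      = (\<integral>\<^sup>+ t. ennreal (norm (f t)) * (\<integral>\<^sup>+ s. ennreal (norm (g s)) \<partial>lborel) \<partial>lborel)"
    by (subst lborel.nn_integral_fst[symmetric]) (auto simp: ennreal_mult nn_integral_cmult)
  also have "\<dots> = (\<integral>\<^sup>+ t. ennreal (norm (f t)) \<partial>lborel) * (\<integral>\<^sup>+ s. ennreal (norm (g s)) \<partial>lborel)"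
    by (subst nn_integral_multc) auto
  also have "\<dots> < \<infinity>"
    using f g unfolding integrable_iff_bounded by (simp add: ennreal_mult_less_top)
  finally have "integrable (lborel \<Otimes>\<^sub>M lborel) (\<lambda>z. norm (f (fst z)) * norm (g (snd z)))"
    by (intro integrableI_bounded) (auto simp: abs_mult)
  then show ?thesis
  proof (rule Bochner_Integration.integrable_bound[OF integrable_mult_right[where c=K]])
    show "(\<lambda>z. bop (f (fst z)) (g (snd z))) \<in> borel_measurable (lborel \<Otimes>\<^sub>M lborel)"
      using set_borel_measurable_bounded_bilinear[OF bop, of "lborel \<Otimes>\<^sub>M lborel" UNIV "\<lambda>z. f (fst z)" "\<lambda>z. g (snd z)"]
      by (simp add: set_borel_measurable_def)
    show "AE z in lborel \<Otimes>\<^sub>M lborel. norm (bop (f (fst z)) (g (snd z))) \<le> norm (K * (norm (f (fst z)) * norm (g (snd z))))"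
      using K by (intro AE_I2) (smt (verit) mult.commute mult.left_commute norm_ge_zero real_norm_def zero_le_mult_iff)
  qed
qed

text \<open>Both sides equal the integral of \<open>bop (u t) (w s)\<close> over the triangle \<open>a \<le> t \<le> s \<le> x\<close>,
  computed in the two orders.\<close>

lemma bounded_bilinear_primitive:
  fixes u :: "real \<Rightarrow> 'a::euclidean_space" and w :: "real \<Rightarrow> 'b::euclidean_space"
    and bop :: "'a \<Rightarrow> 'b \<Rightarrow> 'c::euclidean_space"
  assumes bop: "bounded_bilinear bop"
    and u: "set_integrable lborel {a..x} u" and w: "set_integrable lborel {a..x} w"
  shows "bop (primitive a u x) (primitive a w x) =
    (LINT t:{a..x}|lborel. bop (u t) (primitive a w t)) + (LINT t:{a..x}|lborel. bop (primitive a u t) (w t))"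
proof -
  interpret B: bounded_bilinear bop by (rule bop)
  define R where "R = {z :: real \<times> real. a \<le> fst z \<and> fst z \<le> snd z \<and> snd z \<le> x}"
  define F where "F t s = indicator R (t, s) *\<^sub>R bop (u t) (w s)" for t s
  have "R \<in> sets (lborel \<Otimes>\<^sub>M lborel)"
  proof -
    have "{z \<in> space (lborel \<Otimes>\<^sub>M lborel). a \<le> fst z \<and> fst z \<le> snd z \<and> snd z \<le> x} \<in> sets (lborel \<Otimes>\<^sub>M lborel)"
      by measurable
    then show ?thesis
      by (simp add: R_def space_pair_measure)
  qed
  moreover have "integrable (lborel \<Otimes>\<^sub>M lborel)
      (\<lambda>z. bop (indicator {a..x} (fst z) *\<^sub>R u (fst z)) (indicator {a..x} (snd z) *\<^sub>R w (snd z)))"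
    using u w unfolding set_integrable_def by (rule integrable_pair_lborel_bilinear[OF bop])
  ultimately have "integrable (lborel \<Otimes>\<^sub>M lborel)
      (\<lambda>z. indicator R z *\<^sub>R bop (indicator {a..x} (fst z) *\<^sub>R u (fst z)) (indicator {a..x} (snd z) *\<^sub>R w (snd z)))"
    by (rule integrable_mult_indicator)
  moreover have "indicator R z *\<^sub>R bop (indicator {a..x} (fst z) *\<^sub>R u (fst z)) (indicator {a..x} (snd z) *\<^sub>R w (snd z))
      = case_prod F z" for z
    by (cases z) (auto simp: F_def R_def indicator_def)
  ultimately have F: "integrable (lborel \<Otimes>\<^sub>M lborel) (case_prod F)"
    by simp
  have inner_t: "(LBINT t. F t s) = indicator {a..x} s *\<^sub>R bop (primitive a u s) (w s)" for s
  proof (cases "s \<in> {a..x}")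
    case True
    have "(LBINT t. F t s) = (LINT t:{a..s}|lborel. bop (u t) (w s))"
      using True unfolding set_lebesgue_integral_def
      by (intro Bochner_Integration.integral_cong) (auto simp: F_def R_def indicator_def)
    also have "\<dots> = bop (primitive a u s) (w s)"
      unfolding primitive_def using True
      by (intro set_integral_bounded_linear[OF B.bounded_linear_left] set_integrable_subset[OF u]) auto
    finally show ?thesis
      using True by simp
  next
    case False
    then have "(\<lambda>t. F t s) = (\<lambda>_. 0)"
      by (auto simp: F_def R_def fun_eq_iff)
    then show ?thesis
      using False by simp
  qed
  have inner_s: "(LBINT s. F t s) = indicator {a..x} t *\<^sub>R bop (u t) (primitive a w x - primitive a w t)" for t
  proof (cases "t \<in> {a..x}")
    case True
    have w_split: "set_integrable lborel {a..t} w" "set_integrable lborel {t..x} w"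
      using True by (auto intro: set_integrable_subset[OF w])
    have "(LBINT s. F t s) = (LINT s:{t..x}|lborel. bop (u t) (w s))"
      using True unfolding set_lebesgue_integral_def
      by (intro Bochner_Integration.integral_cong) (auto simp: F_def R_def indicator_def)
    also have "\<dots> = bop (u t) (LINT s:{t..x}|lborel. w s)"
      by (rule set_integral_bounded_linear[OF B.bounded_linear_right w_split(2)])
    also have "(LINT s:{t..x}|lborel. w s) = primitive a w x - primitive a w t"
    proof -
      have "primitive a w x = (LINT s:{a..t} \<union> {t..x}|lborel. w s)"
        using True by (simp add: primitive_def ivl_disj_un_two_touch)
      also have "\<dots> = primitive a w t + (LINT s:{t..x}|lborel. w s)"
        unfolding primitive_def
        by (rule set_integral_Un_AE) (auto intro: w_split AE_mp[OF AE_lborel_singleton[of t]])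
      finally show ?thesis
        by simp
    qed
    finally show ?thesis
      using True by simp
  next
    case False
    then have "(\<lambda>s. F t s) = (\<lambda>_. 0)"
      by (auto simp: F_def R_def fun_eq_iff)
    then show ?thesis
      using False by simp
  qed
  have "(LINT t:{a..x}|lborel. bop (primitive a u t) (w t)) = (LBINT t. LBINT s. F t s)"
    using lborel_pair.Fubini_integral[OF F] by (simp add: inner_t set_lebesgue_integral_def)
  also have "\<dots> = (LINT t:{a..x}|lborel. bop (u t) (primitive a w x) - bop (u t) (primitive a w t))"
    by (simp add: inner_s set_lebesgue_integral_def B.diff_right)
  also have "\<dots> = bop (primitive a u x) (primitive a w x) - (LINT t:{a..x}|lborel. bop (u t) (primitive a w t))"
  proof (rule trans[OF set_integral_diff(2)])
    show "set_integrable lborel {a..x} (\<lambda>t. bop (u t) (primitive a w x))"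
      by (rule set_integrable_bounded_linear[OF B.bounded_linear_left u])
    show "set_integrable lborel {a..x} (\<lambda>t. bop (u t) (primitive a w t))"
      using set_integrable_bilinear_continuous_right[OF bop continuous_on_primitive[OF w] u] by simp
  qed (simp add: primitive_def set_integral_bounded_linear[OF B.bounded_linear_left u])
  finally show ?thesis
    by (simp add: algebra_simps)
qed

lemma bounded_bilinear_product_rule:
  fixes u :: "real \<Rightarrow> 'a::euclidean_space" and w :: "real \<Rightarrow> 'b::euclidean_space"
    and bop :: "'a \<Rightarrow> 'b \<Rightarrow> 'c::euclidean_space"
  assumes bop: "bounded_bilinear bop" and "a \<le> x"
    and u: "set_integrable lborel {a..x} u" and w: "set_integrable lborel {a..x} w"
    and U: "\<And>t. t \<in> {a..x} \<Longrightarrow> U t = U\<^sub>0 + primitive a u t"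
    and W: "\<And>t. t \<in> {a..x} \<Longrightarrow> W t = W\<^sub>0 + primitive a w t"
  shows "bop (U x) (W x) = bop U\<^sub>0 W\<^sub>0 + (LINT t:{a..x}|lborel. bop (u t) (W t) + bop (U t) (w t))"
proof -
  interpret B: bounded_bilinear bop by (rule bop)
  have "(LINT t:{a..x}|lborel. bop (u t) (W t) + bop (U t) (w t))
      = (LINT t:{a..x}|lborel. bop (u t) W\<^sub>0 + bop U\<^sub>0 (w t)
           + (bop (u t) (primitive a w t) + bop (primitive a u t) (w t)))"
    by (intro set_lebesgue_integral_cong) (auto simp: U W B.add_left B.add_right)
  also have "\<dots> = bop (primitive a u x) W\<^sub>0 + bop U\<^sub>0 (primitive a w x)
      + bop (primitive a u x) (primitive a w x)"
  proof -
    have "set_integrable lborel {a..x} (\<lambda>t. bop (u t) W\<^sub>0)" "set_integrable lborel {a..x} (\<lambda>t. bop U\<^sub>0 (w t))"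
      using set_integrable_bounded_linear[OF B.bounded_linear_left u]
        set_integrable_bounded_linear[OF B.bounded_linear_right w] by auto
    moreover have "set_integrable lborel {a..x} (\<lambda>t. bop (u t) (primitive a w t))"
      "set_integrable lborel {a..x} (\<lambda>t. bop (primitive a u t) (w t))"
      using set_integrable_bilinear_continuous_right[OF bop continuous_on_primitive[OF w] u]
        set_integrable_bilinear_continuous_left[OF bop continuous_on_primitive[OF u] w] by auto
    ultimately show ?thesis
      using set_integral_bounded_linear[OF B.bounded_linear_left u, of W\<^sub>0]
        set_integral_bounded_linear[OF B.bounded_linear_right w, of U\<^sub>0]
        bounded_bilinear_primitive[OF bop u w]
      by (simp add: set_integral_add primitive_def)
  qed
  finally show ?thesis
    using U[of x] W[of x] \<open>a \<le> x\<close> by (simp add: B.add_left B.add_right algebra_simps)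
qed

section \<open>Weak derivatives\<close>

text \<open>The notion \<open>weak_deriv\<close> of the statement, for functions with values in any Euclidean space
  (\<open>weak_deriv\<close> itself is fixed to \<open>real^3\<close>; \<open>|v|\<^sup>2\<close>, for instance, is real-valued).\<close>

definition has_weak_deriv :: "real set \<Rightarrow> (real \<Rightarrow> 'a::euclidean_space) \<Rightarrow> (real \<Rightarrow> 'a) \<Rightarrow> bool" where
  "has_weak_deriv S f g \<longleftrightarrow> set_integrable lborel S f \<and> set_integrable lborel S g \<and>
     (\<forall>\<psi>. test_fun S \<psi> \<longrightarrow>
        (LINT x:S|lborel. deriv \<psi> x *\<^sub>R f x) = - (LINT x:S|lborel. \<psi> x *\<^sub>R g x))"

lemma weak_deriv_iff_has_weak_deriv: "weak_deriv S f g \<longleftrightarrow> has_weak_deriv S f g"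
  unfolding weak_deriv_def has_weak_deriv_def ..

lemma set_integrable_test_fun_scaleR:
  fixes g :: "real \<Rightarrow> 'a::euclidean_space"
  assumes \<psi>: "test_fun {a<..<b} \<psi>" and g: "set_integrable lborel {a<..<b} g"
  shows "set_integrable lborel {a<..<b} (\<lambda>x. \<psi> x *\<^sub>R g x)"
    and "set_integrable lborel {a<..<b} (\<lambda>x. deriv \<psi> x *\<^sub>R g x)"
  using test_fun_smooth[OF \<psi>]
  by (auto intro!: set_integrable_bilinear_continuous_left[OF bounded_bilinear_scaleR _ g, of a b]
      continuous_on_smooth smooth_deriv)

lemma test_fun_eq_primitive_deriv:
  assumes \<psi>: "test_fun {a<..<b} \<psi>" and t: "t \<in> {a..b}"
  shows "\<psi> t = primitive a (deriv \<psi>) t"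
proof -
  have "smooth \<psi>"
    using \<psi> by (rule test_fun_smooth)
  have "(deriv \<psi> has_integral (\<psi> t - \<psi> a)) {a..t}"
    using t smooth_has_real_derivative[OF \<open>smooth \<psi>\<close>]
    by (intro fundamental_theorem_of_calculus)
      (auto simp: has_real_derivative_iff_has_vector_derivative[symmetric] intro: has_field_derivative_at_within)
  moreover have "\<psi> a = 0"
    using \<psi> by (rule test_fun_eq_0) simp
  moreover have "set_integrable lborel {a..b} (deriv \<psi>)"
    by (intro borel_integrable_atLeastAtMost' continuous_on_smooth smooth_deriv \<open>smooth \<psi>\<close>)
  ultimately show ?thesis
    using t by (simp add: primitive_eq_integral integral_unique)
qed

lemma has_weak_deriv_primitive:
  fixes u :: "real \<Rightarrow> 'a::euclidean_space"
  assumes "a < b" and u: "set_integrable lborel {a<..<b} u"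
    and U: "\<And>t. t \<in> {a..b} \<Longrightarrow> U t = U\<^sub>0 + primitive a u t"
  shows "has_weak_deriv {a<..<b} U u"
proof -
  have u': "set_integrable lborel {a..b} u"
    using u set_integrable_Icc_iff_Ioo by blast
  have "continuous_on {a..b} (\<lambda>t. U\<^sub>0 + primitive a u t)"
    by (intro continuous_intros continuous_on_primitive[OF u'])
  then have "continuous_on {a..b} U"
    by (rule continuous_on_eq) (simp add: U)
  then have U_integrable: "set_integrable lborel {a<..<b} U"
    by (rule set_integrable_continuous_on_Icc) auto
  have "(LINT x:{a<..<b}|lborel. deriv \<psi> x *\<^sub>R U x) = - (LINT x:{a<..<b}|lborel. \<psi> x *\<^sub>R u x)"
    if \<psi>: "test_fun {a<..<b} \<psi>" for \<psi>
  proof -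
    have "set_integrable lborel {a..b} (deriv \<psi>)"
      by (intro borel_integrable_atLeastAtMost' continuous_on_smooth smooth_deriv test_fun_smooth[OF \<psi>])
    then have "\<psi> b *\<^sub>R U b = 0 *\<^sub>R U\<^sub>0 + (LINT t:{a..b}|lborel. deriv \<psi> t *\<^sub>R U t + \<psi> t *\<^sub>R u t)"
      using \<open>a < b\<close> test_fun_eq_primitive_deriv[OF \<psi>]
      by (intro bounded_bilinear_product_rule[OF bounded_bilinear_scaleR _ _ u' _ U]) auto
    moreover have "\<psi> b = 0"
      using \<psi> by (rule test_fun_eq_0) simp
    ultimately have "(LINT t:{a<..<b}|lborel. deriv \<psi> t *\<^sub>R U t + \<psi> t *\<^sub>R u t) = 0"
      by (simp add: set_integral_Icc_eq_Ioo)
    then show ?thesis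
      using set_integrable_test_fun_scaleR[OF \<psi> U_integrable] set_integrable_test_fun_scaleR[OF \<psi> u]
      by (simp add: set_integral_add eq_neg_iff_add_eq_0)
  qed
  then show ?thesis
    unfolding has_weak_deriv_def using U_integrable u by blast
qed

lemma has_weak_deriv_cong_AE:
  fixes f g F G :: "real \<Rightarrow> 'a::euclidean_space"
  assumes fg: "has_weak_deriv {a<..<b} f g"
    and F: "set_borel_measurable lborel {a<..<b} F" "AE x in lborel. x \<in> {a<..<b} \<longrightarrow> f x = F x"
    and G: "set_borel_measurable lborel {a<..<b} G" "AE x in lborel. x \<in> {a<..<b} \<longrightarrow> g x = G x"
  shows "has_weak_deriv {a<..<b} F G"
proof -
  have f: "set_integrable lborel {a<..<b} f" and g: "set_integrable lborel {a<..<b} g"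
    using fg unfolding has_weak_deriv_def by auto
  have F': "set_integrable lborel {a<..<b} F" and G': "set_integrable lborel {a<..<b} G"
    using set_integrable_AE_eq[OF f F(1,2)] set_integrable_AE_eq[OF g G(1,2)] .
  have integral_eq: "(LINT x:{a<..<b}|lborel. \<phi> x *\<^sub>R h x) = (LINT x:{a<..<b}|lborel. \<phi> x *\<^sub>R H x)"
    if "set_integrable lborel {a<..<b} (\<lambda>x. \<phi> x *\<^sub>R h x)" "set_integrable lborel {a<..<b} (\<lambda>x. \<phi> x *\<^sub>R H x)"
      "AE x in lborel. x \<in> {a<..<b} \<longrightarrow> h x = H x" for \<phi> :: "real \<Rightarrow> real" and h H :: "real \<Rightarrow> 'a"
    using that(3) by (intro set_integral_cong_AE set_borel_measurable_set_integrable that(1,2)) auto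
  show ?thesis
    unfolding has_weak_deriv_def
  proof (intro conjI allI impI F' G')
    fix \<psi> assume \<psi>: "test_fun {a<..<b} \<psi>"
    have "(LINT x:{a<..<b}|lborel. deriv \<psi> x *\<^sub>R F x) = (LINT x:{a<..<b}|lborel. deriv \<psi> x *\<^sub>R f x)"
      using F(2) by (intro integral_eq set_integrable_test_fun_scaleR[OF \<psi>] F' f) auto
    also have "\<dots> = - (LINT x:{a<..<b}|lborel. \<psi> x *\<^sub>R g x)"
      using fg \<psi> unfolding has_weak_deriv_def by blast
    also have "(LINT x:{a<..<b}|lborel. \<psi> x *\<^sub>R g x) = (LINT x:{a<..<b}|lborel. \<psi> x *\<^sub>R G x)"
      using G(2) by (intro integral_eq set_integrable_test_fun_scaleR[OF \<psi>] G' g) auto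
    finally show "(LINT x:{a<..<b}|lborel. deriv \<psi> x *\<^sub>R F x) = - (LINT x:{a<..<b}|lborel. \<psi> x *\<^sub>R G x)" .
  qed
qed

lemma has_weak_deriv_unique_AE:
  fixes f g\<^sub>1 g\<^sub>2 :: "real \<Rightarrow> 'a::euclidean_space"
  assumes "a < b" "has_weak_deriv {a<..<b} f g\<^sub>1" "has_weak_deriv {a<..<b} f g\<^sub>2"
  shows "AE x in lborel. x \<in> {a<..<b} \<longrightarrow> g\<^sub>1 x = g\<^sub>2 x"
proof -
  have g: "set_integrable lborel {a<..<b} g\<^sub>1" "set_integrable lborel {a<..<b} g\<^sub>2"
    using assms unfolding has_weak_deriv_def by auto
  have "AE x in lborel. x \<in> {a<..<b} \<longrightarrow> g\<^sub>1 x - g\<^sub>2 x = 0"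
  proof (rule fundamental_lemma_calculus_of_variations[OF \<open>a < b\<close>])
    show "set_integrable lborel {a<..<b} (\<lambda>x. g\<^sub>1 x - g\<^sub>2 x)"
      using g by auto
    fix \<psi> assume \<psi>: "test_fun {a<..<b} \<psi>"
    have "(LINT x:{a<..<b}|lborel. \<psi> x *\<^sub>R g\<^sub>1 x) = (LINT x:{a<..<b}|lborel. \<psi> x *\<^sub>R g\<^sub>2 x)"
      using assms(2,3) \<psi> unfolding has_weak_deriv_def by auto
    then show "(LINT x:{a<..<b}|lborel. \<psi> x *\<^sub>R (g\<^sub>1 x - g\<^sub>2 x)) = 0"
      using set_integrable_test_fun_scaleR(1)[OF \<psi> g(1)] set_integrable_test_fun_scaleR(1)[OF \<psi> g(2)]
      by (simp add: scaleR_right_diff_distrib set_integral_diff)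
  qed
  then show ?thesis
    by (auto elim!: AE_mp)
qed

lemma has_weak_deriv_imp_primitive:
  fixes f g :: "real \<Rightarrow> 'a::euclidean_space"
  assumes "a < b" and fg: "has_weak_deriv {a<..<b} f g"
  obtains C where "AE x in lborel. x \<in> {a<..<b} \<longrightarrow> f x = C + primitive a g x"
proof -
  have f: "set_integrable lborel {a<..<b} f" and g: "set_integrable lborel {a<..<b} g"
    using fg unfolding has_weak_deriv_def by auto
  have G: "has_weak_deriv {a<..<b} (primitive a g) g"
    using has_weak_deriv_primitive[OF \<open>a < b\<close> g, of _ 0] by simp
  then have G': "set_integrable lborel {a<..<b} (primitive a g)"
    unfolding has_weak_deriv_def by blast
  obtain C where "AE x in lborel. x \<in> {a<..<b} \<longrightarrow> f x - primitive a g x = C"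
  proof (rule du_Bois_Reymond[OF \<open>a < b\<close>])
    show "set_integrable lborel {a<..<b} (\<lambda>x. f x - primitive a g x)"
      using f G' by auto
    fix \<psi> assume \<psi>: "test_fun {a<..<b} \<psi>"
    have "(LINT x:{a<..<b}|lborel. deriv \<psi> x *\<^sub>R f x) = (LINT x:{a<..<b}|lborel. deriv \<psi> x *\<^sub>R primitive a g x)"
      using fg G \<psi> unfolding has_weak_deriv_def by auto
    then show "(LINT x:{a<..<b}|lborel. deriv \<psi> x *\<^sub>R (f x - primitive a g x)) = 0"
      using set_integrable_test_fun_scaleR(2)[OF \<psi> f] set_integrable_test_fun_scaleR(2)[OF \<psi> G']
      by (simp add: scaleR_right_diff_distrib set_integral_diff)
  qed
  then show ?thesis
    by (intro that[of C]) (auto elim!: AE_mp)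
qed

lemma has_weak_deriv_AE_bounded:
  fixes f g :: "real \<Rightarrow> 'a::euclidean_space"
  assumes "a < b" "has_weak_deriv {a<..<b} f g"
  obtains M where "AE x in lborel. x \<in> {a<..<b} \<longrightarrow> norm (f x) \<le> M"
proof -
  obtain C where C: "AE x in lborel. x \<in> {a<..<b} \<longrightarrow> f x = C + primitive a g x"
    using has_weak_deriv_imp_primitive[OF assms] .
  have "set_integrable lborel {a..b} g"
    using assms(2) set_integrable_Icc_iff_Ioo unfolding has_weak_deriv_def by blast
  then have "continuous_on {a..b} (\<lambda>x. C + primitive a g x)"
    by (intro continuous_intros continuous_on_primitive)
  then obtain M where "\<And>x. x \<in> {a..b} \<Longrightarrow> norm (C + primitive a g x) \<le> M"
    using continuous_on_compact_bound[OF compact_Icc] by metis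
  then show ?thesis
    using C by (intro that[of M]) (auto elim!: AE_mp)
qed

text \<open>Pass to the absolutely continuous representatives, apply the product rule for primitives,
  and return to the original functions, which agree with them almost everywhere.\<close>

lemma has_weak_deriv_bounded_bilinear:
  fixes f f' :: "real \<Rightarrow> 'a::euclidean_space" and g g' :: "real \<Rightarrow> 'b::euclidean_space"
    and bop :: "'a \<Rightarrow> 'b \<Rightarrow> 'c::euclidean_space"
  assumes bop: "bounded_bilinear bop" and "a < b"
    and f: "has_weak_deriv {a<..<b} f f'" and g: "has_weak_deriv {a<..<b} g g'"
  shows "has_weak_deriv {a<..<b} (\<lambda>x. bop (f x) (g x)) (\<lambda>x. bop (f' x) (g x) + bop (f x) (g' x))"
proof -
  interpret B: bounded_bilinear bop by (rule bop)
  have integrable: "set_integrable lborel {a<..<b} f" "set_integrable lborel {a<..<b} f'"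
    "set_integrable lborel {a<..<b} g" "set_integrable lborel {a<..<b} g'"
    using f g unfolding has_weak_deriv_def by auto
  then have integrable': "set_integrable lborel {a..b} f'" "set_integrable lborel {a..b} g'"
    using set_integrable_Icc_iff_Ioo by blast+
  obtain C where C: "AE x in lborel. x \<in> {a<..<b} \<longrightarrow> f x = C + primitive a f' x"
    using has_weak_deriv_imp_primitive[OF \<open>a < b\<close> f] .
  obtain D where D: "AE x in lborel. x \<in> {a<..<b} \<longrightarrow> g x = D + primitive a g' x"
    using has_weak_deriv_imp_primitive[OF \<open>a < b\<close> g] .
  define F where "F t = C + primitive a f' t" for t
  define G where "G t = D + primitive a g' t" for t
  have "continuous_on {a..b} F" "continuous_on {a..b} G"
    unfolding F_def[abs_def] G_def[abs_def] using integrable'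
    by (auto intro!: continuous_intros continuous_on_primitive)
  define p where "p t = bop (f' t) (G t) + bop (F t) (g' t)" for t
  have "set_integrable lborel {a..b} p"
    unfolding p_def using integrable'
    by (intro set_integral_add(1) set_integrable_bilinear_continuous_right[OF bop \<open>continuous_on {a..b} G\<close>]
        set_integrable_bilinear_continuous_left[OF bop \<open>continuous_on {a..b} F\<close>]) auto
  have "bop (F t) (G t) = bop C D + primitive a p t" if "t \<in> {a..b}" for t
  proof -
    have "set_integrable lborel {a..t} f'" "set_integrable lborel {a..t} g'"
      using that by (auto intro: set_integrable_subset[OF integrable'(1)] set_integrable_subset[OF integrable'(2)])
    then have "bop (F t) (G t) = bop C D + (LINT s:{a..t}|lborel. bop (f' s) (G s) + bop (F s) (g' s))"
      using that by (intro bounded_bilinear_product_rule[OF bop]) (auto simp: F_def G_def)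
    then show ?thesis
      by (simp add: p_def primitive_def)
  qed
  then have "has_weak_deriv {a<..<b} (\<lambda>t. bop (F t) (G t)) p"
    using \<open>set_integrable lborel {a..b} p\<close> set_integrable_Icc_iff_Ioo
    by (intro has_weak_deriv_primitive[OF \<open>a < b\<close>]) auto
  then show ?thesis
  proof (rule has_weak_deriv_cong_AE)
    have "set_borel_measurable lborel {a<..<b} f" "set_borel_measurable lborel {a<..<b} f'"
      "set_borel_measurable lborel {a<..<b} g" "set_borel_measurable lborel {a<..<b} g'"
      using integrable by (simp_all add: set_borel_measurable_set_integrable)
    then have "set_borel_measurable lborel {a<..<b} (\<lambda>x. bop (f x) (g x))"
      "set_borel_measurable lborel {a<..<b} (\<lambda>x. bop (f' x) (g x))"
      "set_borel_measurable lborel {a<..<b} (\<lambda>x. bop (f x) (g' x))"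
      by (simp_all add: set_borel_measurable_bounded_bilinear[OF bop])
    then show "set_borel_measurable lborel {a<..<b} (\<lambda>x. bop (f x) (g x))"
      "set_borel_measurable lborel {a<..<b} (\<lambda>x. bop (f' x) (g x) + bop (f x) (g' x))"
      unfolding set_borel_measurable_def by (simp_all add: scaleR_add_right)
    show "AE x in lborel. x \<in> {a<..<b} \<longrightarrow> bop (F x) (G x) = bop (f x) (g x)"
      using C D by eventually_elim (auto simp: F_def G_def)
    show "AE x in lborel. x \<in> {a<..<b} \<longrightarrow> p x = bop (f' x) (g x) + bop (f x) (g' x)"
      using C D by eventually_elim (auto simp: F_def G_def p_def)
  qed
qed

lemma has_weak_deriv_const:
  assumes "a < b"
  shows "has_weak_deriv {a<..<b} (\<lambda>_. c) (\<lambda>_. 0)"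
  using has_weak_deriv_primitive[OF assms, of "\<lambda>_. 0" "\<lambda>_. c" c]
  by (simp add: primitive_def set_integrable_def)

lemma has_weak_deriv_inner_eq_0_if_norm_const:
  fixes v g :: "real \<Rightarrow> 'a::euclidean_space"
  assumes "a < b" and v: "has_weak_deriv {a<..<b} v g"
    and norm_v: "AE x in lborel. x \<in> {a<..<b} \<longrightarrow> norm (v x) = r"
  shows "AE x in lborel. x \<in> {a<..<b} \<longrightarrow> v x \<bullet> g x = 0"
proof -
  have "has_weak_deriv {a<..<b} (\<lambda>x. v x \<bullet> v x) (\<lambda>x. g x \<bullet> v x + v x \<bullet> g x)"
    by (rule has_weak_deriv_bounded_bilinear[OF bounded_bilinear_inner \<open>a < b\<close> v v])
  then have "has_weak_deriv {a<..<b} (\<lambda>_. r\<^sup>2) (\<lambda>x. g x \<bullet> v x + v x \<bullet> g x)"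
  proof (rule has_weak_deriv_cong_AE)
    show "AE x in lborel. x \<in> {a<..<b} \<longrightarrow> v x \<bullet> v x = r\<^sup>2"
      using norm_v by (auto simp: power2_norm_eq_inner[symmetric] elim!: AE_mp)
    show "set_borel_measurable lborel {a<..<b} (\<lambda>x. g x \<bullet> v x + v x \<bullet> g x)"
      using \<open>has_weak_deriv {a<..<b} (\<lambda>x. v x \<bullet> v x) (\<lambda>x. g x \<bullet> v x + v x \<bullet> g x)\<close>
      unfolding has_weak_deriv_def by (blast intro: set_borel_measurable_set_integrable)
  qed (auto simp: set_borel_measurable_def)
  then have "AE x in lborel. x \<in> {a<..<b} \<longrightarrow> g x \<bullet> v x + v x \<bullet> g x = 0"
    by (rule has_weak_deriv_unique_AE[OF \<open>a < b\<close> _ has_weak_deriv_const[OF \<open>a < b\<close>]])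
  then show ?thesis
    by (auto simp: inner_commute elim!: AE_mp)
qed

section \<open>The weak derivative of the double cross product\<close>

lemma L2_AE_bound:
  fixes h f g :: "real \<Rightarrow> real^3"
  assumes h: "set_borel_measurable lborel S h" and f: "L2 S f" and g: "L2 S g"
    and bound: "AE x in lborel. x \<in> S \<longrightarrow> norm (h x) \<le> c * norm (f x) + d * norm (g x)"
  shows "L2 S h"
  unfolding L2_def
proof
  show "set_integrable lborel S (\<lambda>x. (norm (h x))\<^sup>2)"
  proof (rule set_integrable_bound)
    show "set_integrable lborel S (\<lambda>x. 2 * c\<^sup>2 * (norm (f x))\<^sup>2 + 2 * d\<^sup>2 * (norm (g x))\<^sup>2)"
      using f g unfolding L2_def by (intro set_integral_add set_integrable_mult_right) auto
    show "set_borel_measurable lborel S (\<lambda>x. (norm (h x))\<^sup>2)"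
      using set_borel_measurable_bounded_bilinear[OF bounded_bilinear_inner h h]
      by (simp add: power2_norm_eq_inner)
    show "AE x in lborel. x \<in> S \<longrightarrow> norm ((norm (h x))\<^sup>2) \<le> norm (2 * c\<^sup>2 * (norm (f x))\<^sup>2 + 2 * d\<^sup>2 * (norm (g x))\<^sup>2)"
      using bound
    proof eventually_elim
      case (elim x)
      show ?case
      proof
        assume "x \<in> S"
        then have "norm (h x) \<le> \<bar>c\<bar> * norm (f x) + \<bar>d\<bar> * norm (g x)"
          using elim by (smt (verit) abs_ge_self mult_right_mono norm_ge_zero)
        then have "(norm (h x))\<^sup>2 \<le> (\<bar>c\<bar> * norm (f x) + \<bar>d\<bar> * norm (g x))\<^sup>2"
          by (simp add: power_mono)
        also have "\<dots> \<le> 2 * c\<^sup>2 * (norm (f x))\<^sup>2 + 2 * d\<^sup>2 * (norm (g x))\<^sup>2"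
          using sum_squares_bound[of "\<bar>c\<bar> * norm (f x)" "\<bar>d\<bar> * norm (g x)"]
          by (simp add: power2_sum power_mult_distrib)
        finally show "norm ((norm (h x))\<^sup>2) \<le> norm (2 * c\<^sup>2 * (norm (f x))\<^sup>2 + 2 * d\<^sup>2 * (norm (g x))\<^sup>2)"
          by simp
      qed
    qed
  qed
qed (rule h)

lemma set_integrable_inner_L2:
  assumes f: "L2 S f" and g: "L2 S g"
  shows "set_integrable lborel S (\<lambda>x. f x \<bullet> g x)"
proof (rule set_integrable_bound)
  show "set_integrable lborel S (\<lambda>x. (norm (f x))\<^sup>2 + (norm (g x))\<^sup>2)"
    using f g unfolding L2_def by auto
  show "set_borel_measurable lborel S (\<lambda>x. f x \<bullet> g x)"
    using f g unfolding L2_def by (auto intro: set_borel_measurable_bounded_bilinear[OF bounded_bilinear_inner])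
  show "AE x in lborel. x \<in> S \<longrightarrow> norm (f x \<bullet> g x) \<le> norm ((norm (f x))\<^sup>2 + (norm (g x))\<^sup>2)"
  proof (intro AE_I2 impI)
    fix x
    have "\<bar>f x \<bullet> g x\<bar> \<le> norm (f x) * norm (g x)"
      by (rule Cauchy_Schwarz_ineq2)
    also have "\<dots> \<le> (norm (f x))\<^sup>2 + (norm (g x))\<^sup>2"
      using sum_squares_bound[of "norm (f x)" "norm (g x)"] mult_nonneg_nonneg[OF norm_ge_zero norm_ge_zero, of "f x" "g x"]
      by linarith
    finally show "norm (f x \<bullet> g x) \<le> norm ((norm (f x))\<^sup>2 + (norm (g x))\<^sup>2)"
      by simp
  qed
qed

lemma cross3_cross3_left: "cross3 (cross3 x y) z = (x \<bullet> z) *\<^sub>R y - (y \<bullet> z) *\<^sub>R x"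
  using Lagrange[of z x y] cross_skew[of "cross3 x y" z] by (simp add: inner_commute)

lemma norm_cross3_le: "norm (cross3 x y) \<le> norm x * norm y"
  using norm_cross_dot[of x y] by (metis abs_norm_cancel le_add_same_cancel1 power2_le_imp_le zero_le_power2
      norm_ge_zero mult_nonneg_nonneg)

lemma bounded_bilinear_cross3: "bounded_bilinear cross3"
  using bilinear_cross bilinear_conv_bounded_bilinear by blast

lemma norm_cross3_cross3_le: "norm (cross3 (cross3 x y) z) \<le> norm x * norm y * norm z"
  by (meson mult_right_mono norm_cross3_le norm_ge_zero order.trans)

lemma norm_cross3_Leibniz_le:
  assumes "norm v = 1"
  shows "norm (cross3 (cross3 p' v + cross3 p g) v + cross3 (cross3 p v) g) \<le> norm p' + 2 * norm p * norm g"
proof -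
  have "norm (cross3 (cross3 p' v + cross3 p g) v + cross3 (cross3 p v) g)
      = norm (cross3 (cross3 p' v) v + cross3 (cross3 p g) v + cross3 (cross3 p v) g)"
    by (simp add: cross_add_left)
  also have "\<dots> \<le> norm (cross3 (cross3 p' v) v) + norm (cross3 (cross3 p g) v) + norm (cross3 (cross3 p v) g)"
    by (intro order.trans[OF norm_triangle_ineq] add_right_mono norm_triangle_ineq)
  also have "\<dots> \<le> norm p' + norm p * norm g + norm p * norm g"
  proof -
    have "norm (cross3 (cross3 p' v) v) \<le> norm p'" "norm (cross3 (cross3 p g) v) \<le> norm p * norm g"
      "norm (cross3 (cross3 p v) g) \<le> norm p * norm g"
      using norm_cross3_cross3_le[of p' v v] norm_cross3_cross3_le[of p g v] norm_cross3_cross3_le[of p v g] assms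
      by simp_all
    then show ?thesis
      by linarith
  qed
  finally show ?thesis
    by (simp add: algebra_simps)
qed

lemma inner_cross3_Leibniz_unit:
  assumes "v \<bullet> v = 1" "v \<bullet> g = 0"
  shows "(cross3 (cross3 p' v + cross3 p g) v + cross3 (cross3 p v) g) \<bullet> g = (g \<bullet> g) * (v \<bullet> p) - g \<bullet> p'"
proof -
  have "g \<bullet> v = 0"
    using assms(2) by (simp add: inner_commute)
  then show ?thesis
    using assms
    by (simp add: cross_add_left cross3_cross3_left inner_add_left inner_diff_left
        inner_commute[of p' g] inner_commute[of p v])
qed

lemma H1_grad_cross3_cross3:
  assumes "a < b" and v: "H1_grad {a<..<b} v g" and unit: "AE x in lborel. x \<in> {a<..<b} \<longrightarrow> norm (v x) = 1"
    and \<phi>: "H1_grad {a<..<b} \<phi> \<phi>'"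
  shows "H1_grad {a<..<b} (\<lambda>x. cross3 (cross3 (\<phi> x) (v x)) (v x))
    (\<lambda>x. cross3 (cross3 (\<phi>' x) (v x) + cross3 (\<phi> x) (g x)) (v x) + cross3 (cross3 (\<phi> x) (v x)) (g x))"
    (is "H1_grad _ ?T ?q")
proof -
  have "has_weak_deriv {a<..<b} v g" "has_weak_deriv {a<..<b} \<phi> \<phi>'"
    using v \<phi> by (simp_all add: H1_grad_def weak_deriv_iff_has_weak_deriv)
  then have deriv: "has_weak_deriv {a<..<b} ?T ?q"
    by (intro has_weak_deriv_bounded_bilinear[OF bounded_bilinear_cross3 \<open>a < b\<close>])
  then have measurable: "set_borel_measurable lborel {a<..<b} ?T" "set_borel_measurable lborel {a<..<b} ?q"
    unfolding has_weak_deriv_def by (auto intro: set_borel_measurable_set_integrable)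
  obtain M where M: "AE x in lborel. x \<in> {a<..<b} \<longrightarrow> norm (\<phi> x) \<le> M"
    using has_weak_deriv_AE_bounded[OF \<open>a < b\<close> \<open>has_weak_deriv {a<..<b} \<phi> \<phi>'\<close>] .
  have "L2 {a<..<b} ?T"
  proof (rule L2_AE_bound[OF measurable(1)])
    show "AE x in lborel. x \<in> {a<..<b} \<longrightarrow> norm (?T x) \<le> 1 * norm (\<phi> x) + 0 * norm (\<phi> x)"
      using unit
    proof eventually_elim
      case (elim x)
      then show ?case
        using norm_cross3_cross3_le[of "\<phi> x" "v x" "v x"] by auto
    qed
  qed (use \<phi> in \<open>simp_all add: H1_grad_def\<close>)
  moreover have "L2 {a<..<b} ?q"
  proof (rule L2_AE_bound[OF measurable(2)])
    show "AE x in lborel. x \<in> {a<..<b} \<longrightarrow> norm (?q x) \<le> 1 * norm (\<phi>' x) + (2 * M) * norm (g x)"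
      using unit M
    proof eventually_elim
      case (elim x)
      show ?case
      proof
        assume "x \<in> {a<..<b}"
        then have "norm (\<phi> x) * norm (g x) \<le> M * norm (g x)"
          using elim by (intro mult_right_mono) auto
        then show "norm (?q x) \<le> 1 * norm (\<phi>' x) + (2 * M) * norm (g x)"
          using elim \<open>x \<in> {a<..<b}\<close> norm_cross3_Leibniz_le[of "v x" "\<phi>' x" "\<phi> x" "g x"] by auto
      qed
    qed
  qed (use v \<phi> in \<open>simp_all add: H1_grad_def\<close>)
  ultimately show ?thesis
    using deriv by (simp add: H1_grad_def weak_deriv_iff_has_weak_deriv)
qed

lemma set_integral_inner_cross3_Leibniz:
  assumes "a < b" and v: "H1_grad {a<..<b} v g" and unit: "AE x in lborel. x \<in> {a<..<b} \<longrightarrow> norm (v x) = 1"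
    and \<phi>: "H1_grad {a<..<b} \<phi> \<phi>'"
  shows "(LINT x:{a<..<b}|lborel.
      (cross3 (cross3 (\<phi>' x) (v x) + cross3 (\<phi> x) (g x)) (v x) + cross3 (cross3 (\<phi> x) (v x)) (g x)) \<bullet> g x)
    = (LINT x:{a<..<b}|lborel. (norm (g x))\<^sup>2 * (v x \<bullet> \<phi> x)) - (LINT x:{a<..<b}|lborel. g x \<bullet> \<phi>' x)"
    (is "(LINT x:_|_. ?q x \<bullet> g x) = (LINT x:_|_. ?A x) - (LINT x:_|_. ?B x)")
proof -
  have deriv: "has_weak_deriv {a<..<b} v g" "has_weak_deriv {a<..<b} \<phi> \<phi>'"
    using v \<phi> by (simp_all add: H1_grad_def weak_deriv_iff_has_weak_deriv)
  have L2: "L2 {a<..<b} v" "L2 {a<..<b} g" "L2 {a<..<b} \<phi>" "L2 {a<..<b} \<phi>'" "L2 {a<..<b} ?q"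
    using v \<phi> H1_grad_cross3_cross3[OF assms] by (simp_all add: H1_grad_def)
  then have measurable: "set_borel_measurable lborel {a<..<b} v" "set_borel_measurable lborel {a<..<b} g"
    "set_borel_measurable lborel {a<..<b} \<phi>" "set_borel_measurable lborel {a<..<b} ?q"
    by (simp_all add: L2_def)
  obtain M where M: "AE x in lborel. x \<in> {a<..<b} \<longrightarrow> norm (\<phi> x) \<le> M"
    using has_weak_deriv_AE_bounded[OF \<open>a < b\<close> deriv(2)] .
  have orth: "AE x in lborel. x \<in> {a<..<b} \<longrightarrow> v x \<bullet> g x = 0"
    by (rule has_weak_deriv_inner_eq_0_if_norm_const[OF \<open>a < b\<close> deriv(1) unit])
  have B: "set_integrable lborel {a<..<b} ?B"
    by (rule set_integrable_inner_L2[OF L2(2,4)])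
  have A: "set_integrable lborel {a<..<b} ?A"
  proof (rule set_integrable_bound)
    show "set_integrable lborel {a<..<b} (\<lambda>x. M * (norm (g x))\<^sup>2)"
      using L2(2) unfolding L2_def by auto
    have "set_borel_measurable lborel {a<..<b} (\<lambda>x. g x \<bullet> g x)"
      "set_borel_measurable lborel {a<..<b} (\<lambda>x. v x \<bullet> \<phi> x)"
      using measurable by (simp_all add: set_borel_measurable_bounded_bilinear[OF bounded_bilinear_inner])
    then show "set_borel_measurable lborel {a<..<b} ?A"
      using set_borel_measurable_bounded_bilinear[OF bounded_bilinear_mult] by (simp add: power2_norm_eq_inner)
    show "AE x in lborel. x \<in> {a<..<b} \<longrightarrow> norm (?A x) \<le> norm (M * (norm (g x))\<^sup>2)"
      using unit M
    proof eventually_elim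
      case (elim x)
      show ?case
      proof
        assume "x \<in> {a<..<b}"
        then have "\<bar>v x \<bullet> \<phi> x\<bar> \<le> M"
          using elim Cauchy_Schwarz_ineq2[of "v x" "\<phi> x"] by auto
        then have "(norm (g x))\<^sup>2 * \<bar>v x \<bullet> \<phi> x\<bar> \<le> (norm (g x))\<^sup>2 * M" "M \<ge> 0"
          by (auto intro: mult_left_mono order.trans[OF abs_ge_zero])
        then show "norm (?A x) \<le> norm (M * (norm (g x))\<^sup>2)"
          by (simp add: abs_mult mult.commute)
      qed
    qed
  qed
  have "(LINT x:{a<..<b}|lborel. ?q x \<bullet> g x) = (LINT x:{a<..<b}|lborel. ?A x - ?B x)"
  proof (rule set_integral_cong_AE)
    show "set_borel_measurable lborel {a<..<b} (\<lambda>x. ?q x \<bullet> g x)"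
      using measurable by (intro set_borel_measurable_bounded_bilinear[OF bounded_bilinear_inner])
    show "set_borel_measurable lborel {a<..<b} (\<lambda>x. ?A x - ?B x)"
      using set_integral_diff(1)[OF A B] by (rule set_borel_measurable_set_integrable)
    show "AE x in lborel. x \<in> {a<..<b} \<longrightarrow> ?q x \<bullet> g x = ?A x - ?B x"
      using unit orth
    proof eventually_elim
      case (elim x)
      then show ?case
        using inner_cross3_Leibniz_unit[of "v x" "g x" "\<phi>' x" "\<phi> x"]
        by (auto simp: power2_norm_eq_inner[symmetric])
    qed
  qed
  also have "\<dots> = (LINT x:{a<..<b}|lborel. ?A x) - (LINT x:{a<..<b}|lborel. ?B x)"
    by (rule set_integral_diff(2)[OF A B])
  finally show ?thesis .
qed

theorem proposition7p2:
  fixes a b :: real and v g \<phi> \<phi>' :: "real \<Rightarrow> real^3"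
  assumes "a < b"
    and "H1_grad {a<..<b} v g"
    and "AE x in lborel. x \<in> {a<..<b} \<longrightarrow> norm (v x) = 1"
    and "H1_grad {a<..<b} \<phi> \<phi>'"
  shows "(\<exists>w. H1_grad {a<..<b} (\<lambda>x. cross3 (cross3 (\<phi> x) (v x)) (v x)) w) \<and>
    (\<forall>w. weak_deriv {a<..<b} (\<lambda>x. cross3 (cross3 (\<phi> x) (v x)) (v x)) w \<longrightarrow>
       - (LINT x:{a<..<b}|lborel. inner (w x) (g x))
       = (LINT x:{a<..<b}|lborel. inner (g x) (\<phi>' x))
         - (LINT x:{a<..<b}|lborel. (norm (g x))\<^sup>2 * inner (v x) (\<phi> x)))"
proof -
  let ?T = "\<lambda>x. cross3 (cross3 (\<phi> x) (v x)) (v x)"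
  let ?q = "\<lambda>x. cross3 (cross3 (\<phi>' x) (v x) + cross3 (\<phi> x) (g x)) (v x) + cross3 (cross3 (\<phi> x) (v x)) (g x)"
  have q: "H1_grad {a<..<b} ?T ?q"
    by (rule H1_grad_cross3_cross3[OF assms])
  moreover have "- (LINT x:{a<..<b}|lborel. w x \<bullet> g x)
      = (LINT x:{a<..<b}|lborel. g x \<bullet> \<phi>' x) - (LINT x:{a<..<b}|lborel. (norm (g x))\<^sup>2 * (v x \<bullet> \<phi> x))"
    if w: "weak_deriv {a<..<b} ?T w" for w
  proof -
    have "has_weak_deriv {a<..<b} ?T w" "has_weak_deriv {a<..<b} ?T ?q"
      using w q by (simp_all add: H1_grad_def weak_deriv_iff_has_weak_deriv)
    then have "AE x in lborel. x \<in> {a<..<b} \<longrightarrow> w x = ?q x"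
      by (rule has_weak_deriv_unique_AE[OF \<open>a < b\<close>])
    then have "(LINT x:{a<..<b}|lborel. w x \<bullet> g x) = (LINT x:{a<..<b}|lborel. ?q x \<bullet> g x)"
      using q w assms(2)
      by (intro set_integral_cong_AE set_borel_measurable_bounded_bilinear[OF bounded_bilinear_inner])
        (auto simp: H1_grad_def L2_def weak_deriv_def intro: set_borel_measurable_set_integrable elim!: AE_mp)
    then show ?thesis
      using set_integral_inner_cross3_Leibniz[OF assms] by simp
  qed
  ultimately show ?thesis
    by blast
qed

end
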